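(* Let $\mathcal{H}_1,\dots,\mathcal{H}_n$ be separable complex Hilbert spaces of arbitrary (finite or infinite) dimension, let $t\in\mathbb{R}$, and let $N_H$ be a positive integer. For $i=1,\dots,N_H$ and $j=1,\dots,n$ let $A_i^{(j)}\in\mathcal{B}(\mathcal{H}_j)$ be bounded self-adjoint operators, and put $T_i=A_i^{(1)}\otimes A_i^{(2)}\otimes\cdots\otimes A_i^{(n)}$ and ${\bf H}=\sum_{i=1}^{N_H}T_i$. Let $U=\exp[-it{\bf H}]$. Assume that $[T_k,T_l]=0$ for every pair $k,l$, and that for each $i$ at most one element of the set $\{A_i^{(1)},\dots,A_i^{(n)}\}$ does not belong to $\mathbb{R}I$. Then, up to a multiplicative complex scalar of modulus one, $$U=U^{(1)}\otimes U^{(2)}\otimes\cdots\otimes U^{(n)},\qquad U^{(j)}=\prod_{k=1}^{N_H}\exp[-it\,\delta(A_k^{(j)})A_k^{(j)}],$$ where, writing $A_k^{(m)}=\lambda_k^{(m)}I$ ($\lambda_k^{(m)}\in\mathbb{R}$) whenever $A_k^{(m)}\in\mathbb{R}I$, one sets $\delta(A_k^{(j)})=\prod_{m\ne j}\lambda_k^{(m)}$ if $A_k^{(j)}\notin\mathbb{R}I$, and $\delta(A_k^{(j)})=0$ if $A_k^{(j)}\in\mathbb{R}I$.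
   Context: $\mathbb{R}I$ denotes the set of real multiples of the identity operator; $[X,Y]=XY-YX$; $\exp$ denotes the operator exponential. Each $U^{(j)}$ is a unitary operator on $\mathcal{H}_j$. *)

theory Defs
  imports "HOL-Analysis.Analysis"
begin

text \<open>Concrete model: a separable complex Hilbert space of dimension card D
  (D a subset of nat) is modelled as l2(D); the Hilbert tensor product of
  l2(D_0),...,l2(D_(n-1)) is modelled as l2 of the set of index tuples.
  Operators are functions on coefficient functions; only their behaviour on
  the relevant l2 set matters.\<close>

definition l2 :: "'i set \<Rightarrow> ('i \<Rightarrow> complex) set" where
  "l2 S = {f. (\<forall>x. x \<notin> S \<longrightarrow> f x = 0) \<and> (\<lambda>x. (cmod (f x))^2) summable_on UNIV}"

definition l2_inner :: "('i \<Rightarrow> complex) \<Rightarrow> ('i \<Rightarrow> complex) \<Rightarrow> complex" where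
  "l2_inner f g = infsum (\<lambda>x. cnj (f x) * g x) UNIV"

definition l2_norm :: "('i \<Rightarrow> complex) \<Rightarrow> real" where
  "l2_norm f = sqrt (infsum (\<lambda>x. (cmod (f x))^2) UNIV)"

definition bounded_op :: "'i set \<Rightarrow> (('i \<Rightarrow> complex) \<Rightarrow> ('i \<Rightarrow> complex)) \<Rightarrow> bool" where
  "bounded_op S A \<longleftrightarrow>
     (\<forall>f\<in>l2 S. A f \<in> l2 S) \<and>
     (\<forall>f\<in>l2 S. \<forall>g\<in>l2 S. \<forall>a b. A (\<lambda>x. a * f x + b * g x) = (\<lambda>x. a * A f x + b * A g x)) \<and>
     (\<exists>C. \<forall>f\<in>l2 S. l2_norm (A f) \<le> C * l2_norm f)"

definition self_adjoint_op :: "'i set \<Rightarrow> (('i \<Rightarrow> complex) \<Rightarrow> ('i \<Rightarrow> complex)) \<Rightarrow> bool" where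
  "self_adjoint_op S A \<longleftrightarrow> bounded_op S A \<and>
     (\<forall>f\<in>l2 S. \<forall>g\<in>l2 S. l2_inner (A f) g = l2_inner f (A g))"

definition scalar_op :: "'i set \<Rightarrow> (('i \<Rightarrow> complex) \<Rightarrow> ('i \<Rightarrow> complex)) \<Rightarrow> real \<Rightarrow> bool" where
  "scalar_op S A lam \<longleftrightarrow> (\<forall>f\<in>l2 S. A f = (\<lambda>x. complex_of_real lam * f x))"

definition real_scalar_op :: "'i set \<Rightarrow> (('i \<Rightarrow> complex) \<Rightarrow> ('i \<Rightarrow> complex)) \<Rightarrow> bool" where
  "real_scalar_op S A \<longleftrightarrow> (\<exists>lam. scalar_op S A lam)"

definition scal :: "'i set \<Rightarrow> (('i \<Rightarrow> complex) \<Rightarrow> ('i \<Rightarrow> complex)) \<Rightarrow> real" where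
  "scal S A = (SOME lam. scalar_op S A lam)"

text \<open>delta(A_k^(j)) for the k-th term (Ak = the family j \<mapsto> A_k^(j)).\<close>
definition delta :: "nat \<Rightarrow> (nat \<Rightarrow> nat set) \<Rightarrow> (nat \<Rightarrow> (nat \<Rightarrow> complex) \<Rightarrow> (nat \<Rightarrow> complex)) \<Rightarrow> nat \<Rightarrow> real" where
  "delta n D Ak j = (if real_scalar_op (D j) (Ak j) then 0
                     else (\<Prod>m\<in>{..<n} - {j}. scal (D m) (Ak m)))"

definition basis :: "'i \<Rightarrow> ('i \<Rightarrow> complex)" where
  "basis y = (\<lambda>z. if z = y then 1 else 0)"

definition tuples :: "nat \<Rightarrow> (nat \<Rightarrow> nat set) \<Rightarrow> (nat \<Rightarrow> nat) set" where
  "tuples n D = {y. (\<forall>j<n. y j \<in> D j) \<and> (\<forall>j\<ge>n. y j = 0)}"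

text \<open>Tensor product B_0 \<otimes> ... \<otimes> B_(n-1) of bounded operators, given by its
  matrix entries  <e_x, (\<otimes>B) e_y> = \<Prod>j. <e_(x j), B_j e_(y j)>.\<close>
definition tensor_op :: "nat \<Rightarrow> (nat \<Rightarrow> nat set) \<Rightarrow> (nat \<Rightarrow> (nat \<Rightarrow> complex) \<Rightarrow> (nat \<Rightarrow> complex))
     \<Rightarrow> ((nat \<Rightarrow> nat) \<Rightarrow> complex) \<Rightarrow> ((nat \<Rightarrow> nat) \<Rightarrow> complex)" where
  "tensor_op n D B \<psi> = (\<lambda>x. if x \<in> tuples n D
      then infsum (\<lambda>y. (\<Prod>j<n. B j (basis (y j)) (x j)) * \<psi> y) (tuples n D)
      else 0)"

definition op_exp :: "(('i \<Rightarrow> complex) \<Rightarrow> ('i \<Rightarrow> complex)) \<Rightarrow> ('i \<Rightarrow> complex) \<Rightarrow> ('i \<Rightarrow> complex)" where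
  "op_exp X \<psi> = (\<lambda>x. (\<Sum>k. (X ^^ k) \<psi> x / of_nat (fact k)))"

definition U_factor :: "nat \<Rightarrow> (nat \<Rightarrow> nat set) \<Rightarrow> real \<Rightarrow> nat
     \<Rightarrow> (nat \<Rightarrow> nat \<Rightarrow> (nat \<Rightarrow> complex) \<Rightarrow> (nat \<Rightarrow> complex)) \<Rightarrow> nat
     \<Rightarrow> (nat \<Rightarrow> complex) \<Rightarrow> (nat \<Rightarrow> complex)" where
  "U_factor n D t NH A j = foldr (\<circ>)
     (map (\<lambda>k. op_exp (\<lambda>\<phi> x. - \<i> * complex_of_real t * complex_of_real (delta n D (A k) j) * A k j \<phi> x))
          [0..<NH]) id"

end

theory Submission
  imports Defs
begin

(* Every bounded operator on l2(D_j), and every tensor product of such operators, is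
   represented by an element of the Banach algebra of bounded complex-linear operators on l2 of the
   index tuples; there the pointwise exponential series of op_exp is the Banach-algebra exponential.
   As all factors of T_k but at most one (at the site j_k) are real multiples of the identity,
   -itT_k is the scalar -it s_k (when every factor is scalar) or the lift to site j_k of
   -it delta(A_k^(j_k)) A_k^(j_k).  Two such terms at the same site are nonzero multiples of the
   lifts of their factors, and lifting is injective, so [T_k, T_l] = 0 makes these factors commute.
   Hence exp(-itH) = exp(-it sum_k s_k) * prod_j lift_j (exp (sum_k -it delta(A_k^(j)) A_k^(j))),
   lifts to different sites commute, and each inner exponential splits into the product U^(j).
   Self-adjointness is used only through boundedness. *)

lemma cmod_add_sq_le: "(cmod (a + b))^2 \<le> 2 * (cmod a)^2 + 2 * (cmod b)^2"
proof -
  have "cmod (a+b) \<le> cmod a + cmod b" by (rule norm_triangle_ineq)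
  hence "(cmod (a+b))^2 \<le> (cmod a + cmod b)^2" by (simp add: power_mono)
  also have "\<dots> \<le> 2 * (cmod a)^2 + 2 * (cmod b)^2"
    using zero_le_power2[of "cmod a - cmod b"] unfolding power2_eq_square by (simp add: algebra_simps)
  finally show ?thesis .
qed

lemma sq_summable_add:
  assumes "(\<lambda>x. (cmod (f x))^2) summable_on A" "(\<lambda>x. (cmod (g x))^2) summable_on A"
  shows "(\<lambda>x. (cmod (f x + g x))^2) summable_on A"
proof (rule summable_on_comparison_test)
  show "(\<lambda>x. 2 * (cmod (f x))^2 + 2 * (cmod (g x))^2) summable_on A"
    by (intro summable_on_add summable_on_cmult_right assms)
qed (auto intro: cmod_add_sq_le)

lemma sq_summable_scale:
  assumes "(\<lambda>x. (cmod (f x))^2) summable_on A"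
  shows "(\<lambda>x. (cmod (c * f x))^2) summable_on A"
  using summable_on_cmult_right[OF assms, of "(cmod c)^2"] by (simp add: norm_mult power_mult_distrib)

lemma cnj_mult_summable:
  assumes "(\<lambda>x. (cmod (f x))^2) summable_on A" "(\<lambda>x. (cmod (g x))^2) summable_on A"
  shows "(\<lambda>x. cnj (f x) * g x) summable_on A"
proof -
  have "(\<lambda>x. norm (cnj (f x) * g x)) summable_on A"
  proof (rule summable_on_comparison_test)
    show "(\<lambda>x. (cmod (f x))^2 + (cmod (g x))^2) summable_on A"
      using summable_on_add[OF assms] by simp
    fix x
    have "2 * (cmod (f x) * cmod (g x)) \<le> (cmod (f x))^2 + (cmod (g x))^2"
      using zero_le_power2[of "cmod (f x) - cmod (g x)"] unfolding power2_eq_square by (simp add: algebra_simps)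
    moreover have "norm (cnj (f x) * g x) = cmod (f x) * cmod (g x)" by (simp add: norm_mult)
    moreover have "0 \<le> cmod (f x) * cmod (g x)" by simp
    ultimately show "norm (cnj (f x) * g x) \<le> (cmod (f x))^2 + (cmod (g x))^2"
      by linarith
  qed simp
  thus ?thesis by (simp add: abs_summable_summable)
qed

lemma has_sum_finite_sum:
  fixes f :: "'r \<Rightarrow> 'z \<Rightarrow> 'a::{topological_comm_monoid_add, t2_space}"
  assumes "finite R" "\<And>r. r \<in> R \<Longrightarrow> f r summable_on A"
  shows "((\<lambda>z. \<Sum>r\<in>R. f r z) has_sum (\<Sum>r\<in>R. infsum (f r) A)) A"
  using assms
proof (induction R rule: finite_induct)
  case empty thus ?case by simp
next
  case (insert r R)
  have "((\<lambda>z. f r z + (\<Sum>r\<in>R. f r z)) has_sum (infsum (f r) A + (\<Sum>r\<in>R. infsum (f r) A))) A"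
    by (rule has_sum_add) (use insert in auto)
  thus ?case using insert by simp
qed

lemma sum_list_upt_eq_sum: "(\<Sum>k\<leftarrow>[0..<N]. f k) = (\<Sum>k<N. f k)"
  by (simp add: interv_sum_list_conv_sum_set_nat atLeast0LessThan)

lemma eq_if_card_le_one:
  fixes n :: nat
  assumes "card {j. j < n \<and> P j} \<le> 1" "a < n" "P a" "b < n" "P b"
  shows "a = b"
proof -
  have "finite {j. j < n \<and> P j}" by simp
  moreover have "card {j. j < n \<and> P j} \<le> Suc 0" using assms(1) by simp
  ultimately have "\<forall>x\<in>{j. j < n \<and> P j}. \<forall>y\<in>{j. j < n \<and> P j}. x = y"
    by (simp only: card_le_Suc0_iff_eq)
  then show ?thesis using assms(2-5) by simp
qed

lemma sum_list_commute:
  fixes a :: "'a::ring"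
  assumes "\<And>b. b \<in> set xs \<Longrightarrow> a * f b = f b * a"
  shows "a * (\<Sum>x\<leftarrow>xs. f x) = (\<Sum>x\<leftarrow>xs. f x) * a"
  using assms by (induction xs) (auto simp: distrib_left distrib_right)

lemma prod_list_exp_commuting:
  fixes f :: "'b \<Rightarrow> 'a::{real_normed_algebra_1, banach}"
  assumes "\<And>a b. a \<in> set xs \<Longrightarrow> b \<in> set xs \<Longrightarrow> f a * f b = f b * f a"
  shows "(\<Prod>x\<leftarrow>xs. exp (f x)) = exp (\<Sum>x\<leftarrow>xs. f x)"
  using assms
proof (induction xs)
  case Nil thus ?case by simp
next
  case (Cons a xs)
  have "f a * (\<Sum>x\<leftarrow>xs. f x) = (\<Sum>x\<leftarrow>xs. f x) * f a"
    by (rule sum_list_commute) (use Cons.prems in auto)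
  then have "exp (f a) * exp (\<Sum>x\<leftarrow>xs. f x) = exp (f a + (\<Sum>x\<leftarrow>xs. f x))"
    by (rule exp_add_commuting[symmetric])
  with Cons show ?case by simp
qed

section \<open>The Hilbert space of square-summable functions\<close>

typedef 'i ell2 = "{f :: 'i \<Rightarrow> complex. (\<lambda>x. (cmod (f x))^2) summable_on UNIV}"
  morphisms vf Abs_ell2
  by (rule exI[of _ "\<lambda>_. 0"]) simp

setup_lifting type_definition_ell2

lemma vf_summable: "(\<lambda>x. (cmod (vf v x))^2) summable_on A"
  using vf[of v] summable_on_subset_banach by blast

lemma ell2_eqI: "(\<And>x. vf a x = vf b x) \<Longrightarrow> a = b"
  by (metis vf_inject ext)

instantiation ell2 :: (type) real_vector
begin

lift_definition zero_ell2 :: "'a ell2" is "\<lambda>_. 0" by simp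

lift_definition plus_ell2 :: "'a ell2 \<Rightarrow> 'a ell2 \<Rightarrow> 'a ell2" is "\<lambda>f g x. f x + g x"
  by (simp add: sq_summable_add)

lift_definition uminus_ell2 :: "'a ell2 \<Rightarrow> 'a ell2" is "\<lambda>f x. - f x" by simp

lift_definition minus_ell2 :: "'a ell2 \<Rightarrow> 'a ell2 \<Rightarrow> 'a ell2" is "\<lambda>f g x. f x - g x"
  using sq_summable_add[of f UNIV "\<lambda>x. - g x" for f g] by simp

lift_definition scaleR_ell2 :: "real \<Rightarrow> 'a ell2 \<Rightarrow> 'a ell2" is "\<lambda>r f x. complex_of_real r * f x"
  by (simp add: sq_summable_scale)

instance
proof
  fix x y z :: "'a ell2" and r s :: real
  show "x + y + z = x + (y + z)" by transfer (simp add: add.assoc)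
  show "x + y = y + x" by transfer (simp add: add.commute)
  show "0 + x = x" by transfer simp
  show "- x + x = 0" by transfer simp
  show "x - y = x + - y" by transfer simp
  show "r *\<^sub>R (x + y) = r *\<^sub>R x + r *\<^sub>R y" by transfer (simp add: distrib_left)
  show "(r + s) *\<^sub>R x = r *\<^sub>R x + s *\<^sub>R x" by transfer (simp add: distrib_right)
  show "r *\<^sub>R s *\<^sub>R x = (r * s) *\<^sub>R x" by transfer (simp add: mult.assoc)
  show "1 *\<^sub>R x = x" by transfer simp
qed

end

(* Only the real structure is instantiated: the real part of the l2 inner product induces the
   l2 norm, and complex scalars act through cscale below. *)
instantiation ell2 :: (type) real_inner
begin

lift_definition inner_ell2 :: "'a ell2 \<Rightarrow> 'a ell2 \<Rightarrow> real" is
  "\<lambda>f g. infsum (\<lambda>x. Re (cnj (f x) * g x)) UNIV" .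

definition norm_ell2 :: "'a ell2 \<Rightarrow> real" where "norm_ell2 v = sqrt (inner v v)"

definition sgn_ell2 :: "'a ell2 \<Rightarrow> 'a ell2" where "sgn_ell2 v = v /\<^sub>R norm v"

definition dist_ell2 :: "'a ell2 \<Rightarrow> 'a ell2 \<Rightarrow> real" where "dist_ell2 v w = norm (v - w)"

definition uniformity_ell2 :: "('a ell2 \<times> 'a ell2) filter" where
  "uniformity_ell2 = (INF e\<in>{0<..}. principal {(x, y). dist x y < e})"

definition open_ell2 :: "'a ell2 set \<Rightarrow> bool" where
  "open_ell2 U = (\<forall>x\<in>U. \<forall>\<^sub>F (x', y) in uniformity. x' = x \<longrightarrow> y \<in> U)"

lemma Re_cnj_mult_summable: "(\<lambda>x. Re (cnj (vf v x) * vf w x)) summable_on UNIV"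
  using summable_on_Re[OF cnj_mult_summable[OF vf_summable vf_summable]] by simp

instance
proof
  fix x y z :: "'a ell2" and r s :: real
  show "sgn x = inverse (norm x) *\<^sub>R x" by (simp add: sgn_ell2_def divide_inverse_commute)
  show "dist x y = norm (x - y)" by (simp add: dist_ell2_def)
  show "inner x y = inner y x"
    by transfer (simp add: algebra_simps)
  show "inner (x + y) z = inner x z + inner y z"
    unfolding inner_ell2.rep_eq plus_ell2.rep_eq
    by (simp only: complex_cnj_add distrib_right plus_complex.sel infsum_add[OF Re_cnj_mult_summable Re_cnj_mult_summable])
  show "inner (r *\<^sub>R x) y = r * inner x y"
  proof -
    have e: "\<And>a. Re (cnj (complex_of_real r * vf x a) * vf y a) = r * Re (cnj (vf x a) * vf y a)"
      by (simp add: algebra_simps)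
    show ?thesis unfolding inner_ell2.rep_eq scaleR_ell2.rep_eq e
      by (rule infsum_cmult_right) (rule Re_cnj_mult_summable)
  qed
  have sq: "inner x x = infsum (\<lambda>a. (cmod (vf x a))^2) UNIV"
    unfolding inner_ell2.rep_eq by (simp add: cmod_power2 flip: power2_eq_square)
  show "0 \<le> inner x x" unfolding sq by (rule infsum_nonneg) simp
  show "inner x x = 0 \<longleftrightarrow> x = 0"
  proof
    assume "inner x x = 0"
    hence "\<forall>a. (cmod (vf x a))^2 = 0"
      using nonneg_infsum_le_0D[OF _ vf_summable] unfolding sq by (metis UNIV_I order_refl zero_le_power2)
    thus "x = 0" by transfer auto
  next
    assume "x = 0" thus "inner x x = 0" by transfer simp
  qed
  show "norm x = sqrt (inner x x)" by (simp add: norm_ell2_def)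
qed (simp_all add: uniformity_ell2_def open_ell2_def)

end

lemma norm_ell2_sq: "(norm v)^2 = infsum (\<lambda>a. (cmod (vf v a))^2) UNIV"
proof -
  have "inner v v = infsum (\<lambda>a. (cmod (vf v a))^2) UNIV"
    unfolding inner_ell2.rep_eq by (simp add: cmod_power2 flip: power2_eq_square)
  thus ?thesis by (simp add: power2_norm_eq_inner)
qed

lemma norm_ell2: "norm v = sqrt (infsum (\<lambda>a. (cmod (vf v a))^2) UNIV)"
  by (metis norm_ell2_sq norm_ge_zero real_sqrt_unique)

lemma sum_sq_le_norm: "finite F \<Longrightarrow> (\<Sum>a\<in>F. (cmod (vf v a))^2) \<le> (norm v)^2"
  unfolding norm_ell2_sq by (rule finite_sum_le_infsum[OF vf_summable]) auto

lemma vf_le_norm: "cmod (vf v a) \<le> norm v"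
proof -
  have "(\<Sum>a\<in>{a}. (cmod (vf v a))^2) \<le> (norm v)^2" by (rule sum_sq_le_norm) simp
  hence "(cmod (vf v a))^2 \<le> (norm v)^2" by simp
  thus ?thesis by (rule power2_le_imp_le) simp
qed

lemmas vf_plus = plus_ell2.rep_eq and vf_minus = minus_ell2.rep_eq
  and vf_scaleR = scaleR_ell2.rep_eq and vf_zero = zero_ell2.rep_eq

lemma norm_le_if_sums_le:
  assumes "\<And>F. finite F \<Longrightarrow> (\<Sum>a\<in>F. (cmod (vf v a))^2) \<le> B^2" "0 \<le> B"
  shows "norm v \<le> B"
proof -
  have "(norm v)^2 \<le> B^2" unfolding norm_ell2_sq
    by (rule infsum_le_finite_sums[OF vf_summable]) (use assms in auto)
  thus ?thesis using assms(2) by (rule power2_le_imp_le)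
qed

lemma bounded_linear_vf: "bounded_linear (\<lambda>v. vf v a)"
proof (rule bounded_linear_intro[where K=1])
  show "\<And>x y. vf (x + y) a = vf x a + vf y a" by (simp add: vf_plus)
  show "\<And>r x. vf (r *\<^sub>R x) a = r *\<^sub>R vf x a" by (simp add: vf_scaleR scaleR_conv_of_real)
  show "\<And>x. norm (vf x a) \<le> norm x * 1" by (simp add: vf_le_norm)
qed

lemma sq_summable_if_bounded:
  assumes "\<And>F. finite F \<Longrightarrow> (\<Sum>a\<in>F. (cmod (f a))^2) \<le> B"
  shows "(\<lambda>a. (cmod (f a))^2) summable_on A"
proof -
  have "(\<lambda>a. (cmod (f a))^2) summable_on UNIV"
    by (rule nonneg_bdd_above_summable_on) (use assms in \<open>auto intro!: bdd_aboveI\<close>)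
  thus ?thesis using summable_on_subset_banach by blast
qed

lemma Cauchy_ell2_uniform_tail:
  assumes C: "Cauchy X" and lim: "\<And>a. (\<lambda>n. vf (X n) a) \<longlonglongrightarrow> g a" and "e > 0"
  obtains N where "\<And>n F. n \<ge> N \<Longrightarrow> finite F \<Longrightarrow> (\<Sum>a\<in>F. (cmod (vf (X n) a - g a))^2) \<le> e^2"
proof -
  obtain N where N: "\<forall>m\<ge>N. \<forall>n\<ge>N. dist (X m) (X n) < e" using metric_CauchyD[OF C \<open>e > 0\<close>] by blast
  have "(\<Sum>a\<in>F. (cmod (vf (X n) a - g a))^2) \<le> e^2" if "n \<ge> N" "finite F" for n F
  proof (rule tendsto_le[OF trivial_limit_sequentially])
    show "(\<lambda>m. \<Sum>a\<in>F. (cmod (vf (X n) a - vf (X m) a))^2) \<longlonglongrightarrow> (\<Sum>a\<in>F. (cmod (vf (X n) a - g a))^2)"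
      by (intro tendsto_intros lim)
    show "\<forall>\<^sub>F m in sequentially. (\<Sum>a\<in>F. (cmod (vf (X n) a - vf (X m) a))^2) \<le> e^2"
    proof (rule eventually_sequentiallyI[of N])
      fix m assume "m \<ge> N"
      have "(\<Sum>a\<in>F. (cmod (vf (X n) a - vf (X m) a))^2) \<le> (norm (X n - X m))^2"
        using sum_sq_le_norm[OF \<open>finite F\<close>, of "X n - X m"] by (simp add: vf_minus)
      also have "\<dots> \<le> e^2" using N \<open>m \<ge> N\<close> \<open>n \<ge> N\<close>
        by (intro power_mono) (auto simp: dist_norm less_imp_le)
      finally show "(\<Sum>a\<in>F. (cmod (vf (X n) a - vf (X m) a))^2) \<le> e^2" .
    qed
  qed simp
  then show ?thesis by (rule that)
qed

instance ell2 :: (type) banach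
proof
  fix X :: "nat \<Rightarrow> 'a ell2" assume C: "Cauchy X"
  define g where "g a = lim (\<lambda>n. vf (X n) a)" for a
  have lim: "(\<lambda>n. vf (X n) a) \<longlonglongrightarrow> g a" for a
    using bounded_linear.Cauchy[OF bounded_linear_vf C] unfolding g_def
    by (simp add: Cauchy_convergent_iff convergent_LIMSEQ_iff)
  obtain N where "\<And>n F. n \<ge> N \<Longrightarrow> finite F \<Longrightarrow> (\<Sum>a\<in>F. (cmod (vf (X n) a - g a))^2) \<le> 1^2"
    using Cauchy_ell2_uniform_tail[OF C lim, of 1] by auto
  then have "(\<lambda>a. (cmod (vf (X N) a - g a))^2) summable_on UNIV"
    by (intro sq_summable_if_bounded) auto
  then have "(\<lambda>a. (cmod (vf (X N) a + (-1) * (vf (X N) a - g a)))^2) summable_on UNIV"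
    by (intro sq_summable_add sq_summable_scale vf_summable)
  then have vf_G: "vf (Abs_ell2 g) = g" by (simp add: Abs_ell2_inverse)
  have "X \<longlonglongrightarrow> Abs_ell2 g"
  proof (rule metric_LIMSEQ_I)
    fix e :: real assume "e > 0"
    then obtain N where N: "\<And>n F. n \<ge> N \<Longrightarrow> finite F \<Longrightarrow> (\<Sum>a\<in>F. (cmod (vf (X n) a - g a))^2) \<le> (e/2)^2"
      using Cauchy_ell2_uniform_tail[OF C lim, of "e/2"] by auto
    have "dist (X n) (Abs_ell2 g) < e" if "n \<ge> N" for n
    proof -
      have "norm (X n - Abs_ell2 g) \<le> e/2"
        by (rule norm_le_if_sums_le) (use N that \<open>e > 0\<close> in \<open>auto simp: vf_minus vf_G\<close>)
      with \<open>e > 0\<close> show ?thesis by (simp add: dist_norm)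
    qed
    then show "\<exists>N. \<forall>n\<ge>N. dist (X n) (Abs_ell2 g) < e" by blast
  qed
  then show "convergent X" by (rule convergentI)
qed

lift_definition cscale :: "complex \<Rightarrow> 'i ell2 \<Rightarrow> 'i ell2" is "\<lambda>c f x. c * f x"
  by (simp add: sq_summable_scale)

lemmas vf_cscale = cscale.rep_eq

lemma cscale_add: "cscale c (v + w) = cscale c v + cscale c w"
  by transfer (simp add: distrib_left)

lemma cscale_scaleR: "cscale c (r *\<^sub>R v) = r *\<^sub>R cscale c v"
  by transfer (simp add: algebra_simps)

lemma cscale_cscale: "cscale c (cscale d v) = cscale (c * d) v"
  by transfer (simp add: algebra_simps)

lemma cscale_one[simp]: "cscale 1 v = v"
  by transfer simp

lemma cscale_of_real: "cscale (complex_of_real r) v = r *\<^sub>R v"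
  by transfer simp

lemma norm_cscale: "norm (cscale c v) = cmod c * norm v"
proof -
  have "(norm (cscale c v))^2 = (cmod c * norm v)^2"
    unfolding norm_ell2_sq power_mult_distrib
    by (simp add: vf_cscale norm_mult power_mult_distrib infsum_cmult_right vf_summable)
  thus ?thesis by (simp add: power2_eq_iff_nonneg)
qed

lemma bounded_linear_cscale: "bounded_linear (cscale c)"
  by (rule bounded_linear_intro[where K="cmod c"]) (auto simp: cscale_add cscale_scaleR norm_cscale)

lemma cscale_zero[simp]: "cscale c 0 = 0" by transfer simp

lemma cscale_minus: "cscale c (v - w) = cscale c v - cscale c w"
  by transfer (simp add: algebra_simps)

lemma cscale_uminus: "cscale c (- v) = - cscale c v" by transfer (simp add: algebra_simps)

lemma cscale_sum_right: "cscale c (sum f I) = (\<Sum>i\<in>I. cscale c (f i))"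
  by (induction I rule: infinite_finite_induct) (auto simp: cscale_add)

lemma cscale_zero_left[simp]: "cscale 0 v = 0"
  by (rule ell2_eqI) (simp add: vf_cscale vf_zero)

lemma basis_sq_summable: "(\<lambda>x. (cmod (basis y x))^2) summable_on UNIV"
proof (rule sq_summable_if_bounded[where B=1])
  fix F :: "'a set" assume "finite F"
  have "(\<Sum>x\<in>F. (cmod (basis y x))^2) = (\<Sum>x\<in>F. if x = y then 1 else 0)"
    by (rule sum.cong) (auto simp: basis_def)
  also have "\<dots> \<le> 1" using \<open>finite F\<close> by (simp add: sum.delta')
  finally show "(\<Sum>x\<in>F. (cmod (basis y x))^2) \<le> 1" .
qed

lift_definition ket :: "'i \<Rightarrow> 'i ell2" is basis by (rule basis_sq_summable)

lemma vf_ket: "vf (ket y) x = (if x = y then 1 else 0)"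
  by transfer (simp add: basis_def)

lemma ket_neq0: "ket y \<noteq> 0"
proof
  assume "ket y = 0" hence "vf (ket y) y = vf 0 y" by simp
  thus False by (simp add: vf_ket vf_zero)
qed

lemma vf_sum: "vf (sum f F) a = (\<Sum>y\<in>F. vf (f y) a)"
  by (induction F rule: infinite_finite_induct) (auto simp: vf_plus vf_zero)

lemma cscale_sum_left: "cscale (sum f I) v = (\<Sum>i\<in>I. cscale (f i) v)"
  by (rule ell2_eqI) (simp add: vf_cscale vf_sum sum_distrib_right)

lemma Abs_basis: "Abs_ell2 (basis y) = ket y"
  by (metis ket.rep_eq vf_inverse)

lemma basis_l2: "y \<in> S \<Longrightarrow> basis y \<in> l2 S"
  using basis_sq_summable[of y] by (auto simp: l2_def basis_def)

lemma norm_sq_ket_remainder: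
  assumes "finite F"
  shows "(norm (v - (\<Sum>y\<in>F. cscale (vf v y) (ket y))))^2
       = infsum (\<lambda>a. (cmod (vf v a))^2) UNIV - (\<Sum>a\<in>F. (cmod (vf v a))^2)"
proof -
  define h where "h = (\<lambda>a. (cmod (vf v a))^2)"
  have s1: "(\<lambda>a. if a \<in> F then 0 else h a) summable_on UNIV"
    by (rule summable_on_comparison_test[OF vf_summable[of v]]) (auto simp: h_def)
  have s2: "(\<lambda>a. if a \<in> F then h a else 0) summable_on UNIV"
    using assms by (intro finite_nonzero_values_imp_summable_on) (auto elim: finite_subset[rotated])
  have "infsum (\<lambda>a. if a \<in> F then h a else 0) UNIV = infsum h F"
    by (rule infsum_cong_neutral) auto
  also have "\<dots> = sum h F" using assms by simp
  finally have "infsum (\<lambda>a. if a \<in> F then h a else 0) UNIV = sum h F" .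
  moreover have "infsum h UNIV = infsum (\<lambda>a. (if a \<in> F then 0 else h a) + (if a \<in> F then h a else 0)) UNIV"
    by (rule infsum_cong) simp
  ultimately have "infsum h UNIV = infsum (\<lambda>a. if a \<in> F then 0 else h a) UNIV + sum h F"
    using infsum_add[OF s1 s2] by simp
  moreover have "(cmod (vf (v - (\<Sum>y\<in>F. cscale (vf v y) (ket y))) a))^2 = (if a \<in> F then 0 else h a)" for a
    using assms by (simp add: h_def vf_minus vf_sum vf_cscale vf_ket if_distrib[of "\<lambda>x. _ * x"] sum.If_cases)
  ultimately show ?thesis unfolding norm_ell2_sq by (simp add: h_def)
qed

lemma ket_expansion: "((\<lambda>y. cscale (vf v y) (ket y)) has_sum v) UNIV"
  unfolding has_sum_def
proof (rule tendstoI)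
  define h where "h = (\<lambda>a. (cmod (vf v a))^2)"
  fix e :: real assume "e > 0"
  have "(h has_sum infsum h UNIV) UNIV" unfolding h_def using vf_summable by (rule has_sum_infsum)
  then have "\<forall>\<^sub>F F in finite_subsets_at_top UNIV. dist (sum h F) (infsum h UNIV) < e^2"
    unfolding has_sum_def using \<open>e > 0\<close> by (intro tendstoD) simp_all
  moreover have "\<forall>\<^sub>F F in finite_subsets_at_top UNIV. finite F"
    by (simp add: eventually_finite_subsets_at_top_weakI)
  ultimately show "\<forall>\<^sub>F F in finite_subsets_at_top UNIV. dist (\<Sum>y\<in>F. cscale (vf v y) (ket y)) v < e"
  proof eventually_elim
    case (elim F)
    have "(dist (\<Sum>y\<in>F. cscale (vf v y) (ket y)) v)^2 = infsum h UNIV - sum h F"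
      using norm_sq_ket_remainder[OF elim(2)] by (simp add: h_def dist_norm norm_minus_commute)
    also have "\<dots> < e^2" using elim(1) by (simp add: dist_real_def)
    finally show ?case using \<open>e > 0\<close> by (simp add: power_less_imp_less_base)
  qed
qed

section \<open>Bounded complex-linear operators\<close>

(* Real bounded linear maps commuting with complex scalars form a real Banach algebra, which
   provides exp and exp_add_commuting. *)
typedef 'i bop = "{W :: 'i ell2 \<Rightarrow>\<^sub>L 'i ell2. \<forall>c v. blinfun_apply W (cscale c v) = cscale c (blinfun_apply W v)}"
  morphisms bl Abs_bop
  by (rule exI[of _ 0]) simp

setup_lifting type_definition_bop

instantiation bop :: (type) real_normed_vector
begin

lift_definition zero_bop :: "'a bop" is 0 by simp

lift_definition plus_bop :: "'a bop \<Rightarrow> 'a bop \<Rightarrow> 'a bop" is "(+)" by (simp add: blinfun.add_left cscale_add)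

lift_definition minus_bop :: "'a bop \<Rightarrow> 'a bop \<Rightarrow> 'a bop" is "(-)" by (simp add: blinfun.diff_left cscale_minus)

lift_definition uminus_bop :: "'a bop \<Rightarrow> 'a bop" is "uminus" by (simp add: blinfun.minus_left cscale_uminus)

lift_definition scaleR_bop :: "real \<Rightarrow> 'a bop \<Rightarrow> 'a bop" is "scaleR" by (simp add: blinfun.scaleR_left cscale_scaleR)

lift_definition norm_bop :: "'a bop \<Rightarrow> real" is norm .

definition sgn_bop :: "'a bop \<Rightarrow> 'a bop" where "sgn_bop x = inverse (norm x) *\<^sub>R x"

definition dist_bop :: "'a bop \<Rightarrow> 'a bop \<Rightarrow> real" where "dist_bop v w = norm (v - w)"

definition uniformity_bop :: "('a bop \<times> 'a bop) filter" where
  "uniformity_bop = (INF e\<in>{0<..}. principal {(x, y). dist x y < e})"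

definition open_bop :: "'a bop set \<Rightarrow> bool" where
  "open_bop U = (\<forall>x\<in>U. \<forall>\<^sub>F (x', y) in uniformity. x' = x \<longrightarrow> y \<in> U)"

instance
proof
  fix x y z :: "'a bop" and r s :: real
  show "x + y + z = x + (y + z)" by transfer (rule add.assoc)
  show "x + y = y + x" by transfer (rule add.commute)
  show "0 + x = x" by transfer simp
  show "- x + x = 0" by transfer simp
  show "x - y = x + - y" by transfer simp
  show "r *\<^sub>R (x + y) = r *\<^sub>R x + r *\<^sub>R y" by transfer (rule scaleR_add_right)
  show "(r + s) *\<^sub>R x = r *\<^sub>R x + s *\<^sub>R x" by transfer (rule scaleR_add_left)
  show "r *\<^sub>R s *\<^sub>R x = (r * s) *\<^sub>R x" by transfer simp
  show "1 *\<^sub>R x = x" by transfer simp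
  show "sgn x = inverse (norm x) *\<^sub>R x" by (simp add: sgn_bop_def)
  show "dist x y = norm (x - y)" by (simp add: dist_bop_def)
  show "(norm x = 0) = (x = 0)" by transfer simp
  show "norm (x + y) \<le> norm x + norm y" by transfer (rule norm_triangle_ineq)
  show "norm (r *\<^sub>R x) = \<bar>r\<bar> * norm x" by transfer simp
qed (simp_all add: uniformity_bop_def open_bop_def)

end

lemma norm_id_blinfun_ell2: "norm (id_blinfun :: 'a ell2 \<Rightarrow>\<^sub>L 'a ell2) = 1"
proof (rule antisym[OF norm_blinfun_id_le])
  have "norm (ket undefined :: 'a ell2) \<le> norm (id_blinfun :: 'a ell2 \<Rightarrow>\<^sub>L 'a ell2) * norm (ket undefined :: 'a ell2)"
    using norm_blinfun[of id_blinfun "ket undefined :: 'a ell2"] by simp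
  moreover have "0 < norm (ket undefined :: 'a ell2)" using ket_neq0 by simp
  ultimately show "1 \<le> norm (id_blinfun :: 'a ell2 \<Rightarrow>\<^sub>L 'a ell2)" by simp
qed

instantiation bop :: (type) real_normed_algebra_1
begin

lift_definition one_bop :: "'a bop" is id_blinfun by simp

lift_definition times_bop :: "'a bop \<Rightarrow> 'a bop \<Rightarrow> 'a bop" is "(o\<^sub>L)" by simp

instance
proof
  fix a b c :: "'a bop" and r :: real
  show "a * b * c = a * (b * c)" by transfer (rule blinfun_eqI, simp)
  show "1 * a = a" by transfer (rule blinfun_eqI, simp)
  show "a * 1 = a" by transfer (rule blinfun_eqI, simp)
  show "(a + b) * c = a * c + b * c" by transfer (rule blinfun_eqI, simp add: blinfun.add_left)
  show "a * (b + c) = a * b + a * c" by transfer (rule blinfun_eqI, simp add: blinfun.add_left blinfun.add_right)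
  show "r *\<^sub>R a * b = r *\<^sub>R (a * b)" by transfer (rule blinfun_eqI, simp add: blinfun.scaleR_left)
  show "a * r *\<^sub>R b = r *\<^sub>R (a * b)" by transfer (rule blinfun_eqI, simp add: blinfun.scaleR_left blinfun.scaleR_right)
  show "norm (a * b) \<le> norm a * norm b" by transfer (rule norm_blinfun_compose)
  show "norm (1::'a bop) = 1" by transfer (rule norm_id_blinfun_ell2)
  show "(0::'a bop) \<noteq> 1" by transfer (metis norm_id_blinfun_ell2 norm_zero zero_neq_one)
qed

end

lemma bl_tendsto: "(X \<longlonglongrightarrow> L) \<longleftrightarrow> ((\<lambda>n. bl (X n)) \<longlonglongrightarrow> bl L)"
  unfolding tendsto_iff dist_bop_def dist_blinfun_def by (simp add: norm_bop.rep_eq minus_bop.rep_eq)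

instance bop :: (type) banach
proof
  fix X :: "nat \<Rightarrow> 'a bop" assume C: "Cauchy X"
  have "Cauchy (\<lambda>n. bl (X n))"
    using C unfolding Cauchy_def dist_bop_def dist_blinfun_def by (simp add: norm_bop.rep_eq minus_bop.rep_eq)
  hence "convergent (\<lambda>n. bl (X n))" by (simp add: Cauchy_convergent_iff)
  then obtain L where L: "(\<lambda>n. bl (X n)) \<longlonglongrightarrow> L" by (auto simp: convergent_def)
  have "blinfun_apply L (cscale c v) = cscale c (blinfun_apply L v)" for c v
  proof (rule LIMSEQ_unique)
    show "(\<lambda>n. blinfun_apply (bl (X n)) (cscale c v)) \<longlonglongrightarrow> blinfun_apply L (cscale c v)"
      by (intro tendsto_intros L)
    have "(\<lambda>n. cscale c (blinfun_apply (bl (X n)) v)) \<longlonglongrightarrow> cscale c (blinfun_apply L v)"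
      by (rule bounded_linear.tendsto[OF bounded_linear_cscale]) (intro tendsto_intros L)
    moreover have "blinfun_apply (bl (X n)) (cscale c v) = cscale c (blinfun_apply (bl (X n)) v)" for n
      using bl[of "X n"] by simp
    ultimately show "(\<lambda>n. blinfun_apply (bl (X n)) (cscale c v)) \<longlonglongrightarrow> cscale c (blinfun_apply L v)" by simp
  qed
  hence "bl (Abs_bop L) = L" by (simp add: Abs_bop_inverse)
  hence "X \<longlonglongrightarrow> Abs_bop L" using L by (simp add: bl_tendsto)
  thus "convergent X" by (rule convergentI)
qed

definition bop_apply :: "'i bop \<Rightarrow> 'i ell2 \<Rightarrow> 'i ell2" where "bop_apply W v = blinfun_apply (bl W) v"

lemma bop_apply_mult: "bop_apply (W * V) v = bop_apply W (bop_apply V v)"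
  unfolding bop_apply_def by (simp add: times_bop.rep_eq)

lemma bop_apply_one[simp]: "bop_apply 1 v = v" unfolding bop_apply_def by (simp add: one_bop.rep_eq)

lemma bop_apply_zero_op[simp]: "bop_apply 0 v = 0"
  unfolding bop_apply_def by (simp add: zero_bop.rep_eq)

lemma bop_apply_plus_op: "bop_apply (W + V) v = bop_apply W v + bop_apply V v"
  unfolding bop_apply_def by (simp add: plus_bop.rep_eq blinfun.add_left)

lemma bop_apply_scaleR_op: "bop_apply (r *\<^sub>R W) v = r *\<^sub>R bop_apply W v"
  unfolding bop_apply_def by (simp add: scaleR_bop.rep_eq blinfun.scaleR_left)

lemma bop_apply_add: "bop_apply W (v + w) = bop_apply W v + bop_apply W w"
  unfolding bop_apply_def by (simp add: blinfun.add_right)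

lemma bop_apply_zero[simp]: "bop_apply W 0 = 0" unfolding bop_apply_def by simp

lemma bop_apply_scaleR: "bop_apply W (r *\<^sub>R v) = r *\<^sub>R bop_apply W v"
  unfolding bop_apply_def by (simp add: blinfun.scaleR_right)

lemma bop_apply_cscale: "bop_apply W (cscale c v) = cscale c (bop_apply W v)"
  unfolding bop_apply_def using bl[of W] by simp

lemma bop_apply_sum_op: "bop_apply (sum f F) v = (\<Sum>i\<in>F. bop_apply (f i) v)"
  by (induction F rule: infinite_finite_induct) (auto simp: bop_apply_plus_op)

lemma bop_apply_norm: "norm (bop_apply W v) \<le> norm W * norm v"
  unfolding bop_apply_def by (simp add: norm_bop.rep_eq norm_blinfun)

lemma bounded_linear_bop_apply: "bounded_linear (bop_apply W)"
  unfolding bop_apply_def by (rule blinfun.bounded_linear_right)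

lemma bounded_linear_bop_apply_left: "bounded_linear (\<lambda>W. bop_apply W v)"
proof -
  have "bounded_linear (\<lambda>W::'a bop. blinfun_apply (bl W) v)"
    by (rule bounded_linear_intro[where K="norm v"])
       (auto simp: plus_bop.rep_eq scaleR_bop.rep_eq blinfun.add_left blinfun.scaleR_left norm_bop.rep_eq
             intro: order_trans[OF norm_blinfun] simp: mult.commute)
  thus ?thesis unfolding bop_apply_def .
qed

lemma bop_eqI: "(\<And>v. bop_apply W v = bop_apply V v) \<Longrightarrow> W = V"
  unfolding bop_apply_def by (metis bl_inject blinfun_eqI)

definition bop_of_linear :: "('i ell2 \<Rightarrow> 'i ell2) \<Rightarrow> 'i bop" where
  "bop_of_linear f = Abs_bop (Blinfun f)"

lemma bop_apply_bop_of_linear: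
  assumes "bounded_linear f" "\<And>c v. f (cscale c v) = cscale c (f v)"
  shows "bop_apply (bop_of_linear f) = f"
proof -
  have "Blinfun f \<in> {W. \<forall>c v. blinfun_apply W (cscale c v) = cscale c (blinfun_apply W v)}"
    using assms by (simp add: bounded_linear_Blinfun_apply)
  thus ?thesis unfolding bop_apply_def bop_of_linear_def using assms
    by (simp add: Abs_bop_inverse bounded_linear_Blinfun_apply)
qed

definition cscale_op :: "complex \<Rightarrow> 'i bop" where "cscale_op c = bop_of_linear (cscale c)"

lemma bop_apply_cscale_op: "bop_apply (cscale_op c) v = cscale c v"
  unfolding cscale_op_def by (subst bop_apply_bop_of_linear) (auto simp: bounded_linear_cscale cscale_cscale mult.commute)

lemma cscale_op_commute: "cscale_op c * W = W * cscale_op c"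
  by (rule bop_eqI) (simp add: bop_apply_mult bop_apply_cscale_op bop_apply_cscale)

lemma has_sum_matrix_coeffs: "((\<lambda>y. vf v y * vf (bop_apply W (ket y)) a) has_sum vf (bop_apply W v) a) UNIV"
proof -
  have bl: "bounded_linear (\<lambda>u. vf (bop_apply W u) a)"
    by (rule bounded_linear_compose[OF bounded_linear_vf bounded_linear_bop_apply])
  from has_sum_bounded_linear[OF bl ket_expansion[of v]]
  show ?thesis by (simp add: bop_apply_cscale vf_cscale)
qed

lemma bop_eq_ket: "(\<And>y. bop_apply W (ket y) = bop_apply V (ket y)) \<Longrightarrow> W = V"
proof (rule bop_eqI)
  fix v assume "\<And>y. bop_apply W (ket y) = bop_apply V (ket y)"
  hence "vf (bop_apply W v) a = vf (bop_apply V v) a" for a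
    using has_sum_matrix_coeffs[of v W a] has_sum_matrix_coeffs[of v V a] by (simp add: has_sum_unique)
  thus "bop_apply W v = bop_apply V v" by (simp add: vf_inject[symmetric] fun_eq_iff)
qed

lemma exp_sums_pointwise:
  "(\<lambda>k. vf (bop_apply (W ^ k) v) a / of_nat (fact k)) sums vf (bop_apply (exp W) v) a"
proof -
  have h: "bounded_linear (\<lambda>W. vf (bop_apply W v) a)"
    by (rule bounded_linear_compose[OF bounded_linear_vf bounded_linear_bop_apply_left])
  have "(\<lambda>n. W ^ n /\<^sub>R fact n) sums exp W"
    unfolding exp_def by (rule summable_sums[OF summable_exp_generic])
  from bounded_linear.sums[OF h this]
  show ?thesis by (simp add: bop_apply_scaleR_op vf_scaleR divide_inverse mult.commute of_real_inverse)
qed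

lemma cscale_op_zero: "cscale_op 0 = 0"
  by (rule bop_eqI) (simp add: bop_apply_cscale_op cscale_def zero_ell2_def)

lemma cscale_op_power: "bop_apply (cscale_op z ^ k) v = cscale (z ^ k) v"
  by (induction k) (auto simp: bop_apply_mult bop_apply_cscale_op cscale_cscale)

lemma bop_apply_exp_cscale_op: "bop_apply (exp (cscale_op z)) v = cscale (exp z) v"
proof (rule ell2_eqI)
  fix x
  have "(\<lambda>k. vf (bop_apply (cscale_op z ^ k) v) x / of_nat (fact k)) sums vf (bop_apply (exp (cscale_op z)) v) x"
    by (rule exp_sums_pointwise)
  hence a: "(\<lambda>k. z ^ k / of_nat (fact k) * vf v x) sums vf (bop_apply (exp (cscale_op z)) v) x"
    by (simp add: cscale_op_power vf_cscale)
  have "(\<lambda>k. z ^ k /\<^sub>R fact k) sums exp z" by (rule exp_converges)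
  hence "(\<lambda>k. z ^ k / of_nat (fact k)) sums exp z" by (simp add: scaleR_conv_of_real divide_inverse mult.commute)
  hence "(\<lambda>k. z ^ k / of_nat (fact k) * vf v x) sums (exp z * vf v x)" by (rule sums_mult2)
  thus "vf (bop_apply (exp (cscale_op z)) v) x = vf (cscale (exp z) v) x" using a by (simp add: vf_cscale sums_unique2)
qed

section \<open>Operators on coefficient functions and their representatives\<close>

definition ell2_on :: "'i set \<Rightarrow> 'i ell2 set" where "ell2_on S = {v. \<forall>x. x \<notin> S \<longrightarrow> vf v x = 0}"

definition preserves :: "'i set \<Rightarrow> 'i bop \<Rightarrow> bool" where "preserves S W \<longleftrightarrow> (\<forall>v\<in>ell2_on S. bop_apply W v \<in> ell2_on S)"

definition represents :: "'i set \<Rightarrow> (('i \<Rightarrow> complex) \<Rightarrow> ('i \<Rightarrow> complex)) \<Rightarrow> 'i bop \<Rightarrow> bool" where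
  "represents S F W \<longleftrightarrow> preserves S W \<and> (\<forall>\<psi>\<in>l2 S. F \<psi> = vf (bop_apply W (Abs_ell2 \<psi>)))"

definition restr :: "'i set \<Rightarrow> ('i \<Rightarrow> complex) \<Rightarrow> ('i \<Rightarrow> complex)" where
  "restr S f = (\<lambda>x. if x \<in> S then f x else 0)"

lemma vf_Abs_l2: "\<psi> \<in> l2 S \<Longrightarrow> vf (Abs_ell2 \<psi>) = \<psi>"
  by (simp add: Abs_ell2_inverse l2_def)

lemma Abs_l2_ell2_on: "\<psi> \<in> l2 S \<Longrightarrow> Abs_ell2 \<psi> \<in> ell2_on S"
  by (simp add: ell2_on_def vf_Abs_l2) (simp add: l2_def)

lemma vf_l2_iff: "vf v \<in> l2 S \<longleftrightarrow> v \<in> ell2_on S"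
  by (simp add: l2_def ell2_on_def vf_summable)

lemma l2_norm_eq: "\<psi> \<in> l2 S \<Longrightarrow> l2_norm \<psi> = norm (Abs_ell2 \<psi>)"
  by (simp add: l2_norm_def norm_ell2 vf_Abs_l2)

lemma restr_summable: "(\<lambda>x. (cmod (restr S (vf v) x))^2) summable_on UNIV"
  by (rule summable_on_comparison_test[OF vf_summable[of v]]) (auto simp: restr_def)

lemma restr_l2: "restr S (vf v) \<in> l2 S"
  using restr_summable by (auto simp: l2_def restr_def)

lemma norm_restr: "norm (Abs_ell2 (restr S (vf v))) \<le> norm v"
proof -
  have "vf (Abs_ell2 (restr S (vf v))) = restr S (vf v)" using restr_l2 by (rule vf_Abs_l2)
  thus ?thesis
    by (intro norm_le_if_sums_le) (auto simp: restr_def intro!: order_trans[OF _ sum_sq_le_norm[of _ v]] sum_mono)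
qed

lemma ell2_on_zero[simp]: "0 \<in> ell2_on S" by (simp add: ell2_on_def vf_zero)

lemma ell2_on_add: "v \<in> ell2_on S \<Longrightarrow> w \<in> ell2_on S \<Longrightarrow> v + w \<in> ell2_on S"
  by (simp add: ell2_on_def vf_plus)

lemma ell2_on_scaleR: "v \<in> ell2_on S \<Longrightarrow> r *\<^sub>R v \<in> ell2_on S"
  by (simp add: ell2_on_def vf_scaleR)

lemma ell2_on_cscale: "v \<in> ell2_on S \<Longrightarrow> cscale c v \<in> ell2_on S"
  by (simp add: ell2_on_def vf_cscale)

lemma ell2_on_empty: "v \<in> ell2_on {} \<Longrightarrow> v = 0"
  by (rule ell2_eqI) (simp add: ell2_on_def vf_zero)

lemma restr_ell2_on: "v \<in> ell2_on S \<Longrightarrow> restr S (vf v) = vf v"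
  by (auto simp: restr_def ell2_on_def fun_eq_iff)

lemma preserves_mult: "preserves S W \<Longrightarrow> preserves S V \<Longrightarrow> preserves S (W * V)"
  by (simp add: preserves_def bop_apply_mult)

lemma preserves_one: "preserves S 1" by (simp add: preserves_def)

lemma preserves_zero: "preserves S 0" by (simp add: preserves_def)

lemma preserves_add: "preserves S W \<Longrightarrow> preserves S V \<Longrightarrow> preserves S (W + V)"
  by (simp add: preserves_def bop_apply_plus_op ell2_on_add)

lemma preserves_scaleR: "preserves S W \<Longrightarrow> preserves S (r *\<^sub>R W)"
  by (simp add: preserves_def bop_apply_scaleR_op ell2_on_scaleR)

lemma preserves_cscale_op: "preserves S (cscale_op c)"
  by (simp add: preserves_def bop_apply_cscale_op ell2_on_cscale)

lemma preserves_sum: "(\<And>i. i \<in> I \<Longrightarrow> preserves S (f i)) \<Longrightarrow> preserves S (sum f I)"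
  by (induction I rule: infinite_finite_induct) (auto intro: preserves_add preserves_zero)

lemma preserves_power: "preserves S W \<Longrightarrow> preserves S (W ^ k)"
  by (induction k) (auto intro: preserves_mult preserves_one)

lemma preserves_prod_list: "(\<And>x. x \<in> set xs \<Longrightarrow> preserves S (f x)) \<Longrightarrow> preserves S (prod_list (map f xs))"
  by (induction xs) (auto intro: preserves_mult preserves_one)

lemma preserves_exp: assumes "preserves S W" shows "preserves S (exp W)"
  unfolding preserves_def
proof
  fix v assume v: "v \<in> ell2_on S"
  show "bop_apply (exp W) v \<in> ell2_on S" unfolding ell2_on_def mem_Collect_eq
  proof (intro allI impI)
    fix x assume "x \<notin> S"
    have "vf (bop_apply (W ^ k) v) x = 0" for k
      using preserves_power[OF assms, of k] v \<open>x \<notin> S\<close> by (auto simp: preserves_def ell2_on_def)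
    thus "vf (bop_apply (exp W) v) x = 0" using exp_sums_pointwise[of W v x] by (simp add: sums_0 sums_unique2)
  qed
qed

lemma bop_apply_power_cong:
  assumes "preserves S W" "\<And>v. v \<in> ell2_on S \<Longrightarrow> bop_apply W v = bop_apply W' v" "v \<in> ell2_on S"
  shows "bop_apply (W ^ k) v = bop_apply (W' ^ k) v"
proof (induction k)
  case 0 thus ?case by simp
next
  case (Suc k)
  have "bop_apply (W ^ k) v \<in> ell2_on S" using preserves_power[OF assms(1)] assms(3) by (auto simp: preserves_def)
  thus ?case using Suc assms(2) by (simp add: bop_apply_mult)
qed

lemma bop_apply_exp_cong:
  assumes "preserves S W" "\<And>v. v \<in> ell2_on S \<Longrightarrow> bop_apply W v = bop_apply W' v" "v \<in> ell2_on S"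
  shows "bop_apply (exp W) v = bop_apply (exp W') v"
proof (rule ell2_eqI)
  fix x
  have "(\<lambda>k. vf (bop_apply (W ^ k) v) x / of_nat (fact k)) sums vf (bop_apply (exp W) v) x"
    by (rule exp_sums_pointwise)
  moreover have "(\<lambda>k. vf (bop_apply (W ^ k) v) x / of_nat (fact k)) sums vf (bop_apply (exp W') v) x"
    using exp_sums_pointwise[of W' v x] by (simp add: bop_apply_power_cong[OF assms])
  ultimately show "vf (bop_apply (exp W) v) x = vf (bop_apply (exp W') v) x" by (rule sums_unique2)
qed

lemma bop_apply_prod_list_cong:
  assumes "\<And>j. j \<in> set xs \<Longrightarrow> preserves S (F j)"
    "\<And>j w. j \<in> set xs \<Longrightarrow> w \<in> ell2_on S \<Longrightarrow> bop_apply (F j) w = bop_apply (G j) w" "v \<in> ell2_on S"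
  shows "bop_apply (\<Prod>j\<leftarrow>xs. F j) v = bop_apply (\<Prod>j\<leftarrow>xs. G j) v"
  using assms
proof (induction xs)
  case Nil thus ?case by simp
next
  case (Cons a xs)
  have "bop_apply (\<Prod>j\<leftarrow>xs. F j) v \<in> ell2_on S"
    using preserves_prod_list[of xs S F] Cons.prems by (auto simp: preserves_def)
  thus ?case using Cons by (simp add: bop_apply_mult)
qed

lemma ell2_on_ket: "y \<in> S \<Longrightarrow> ket y \<in> ell2_on S"
  by (simp add: ell2_on_def vf_ket)

lemma restr_ket: "y \<in> S \<Longrightarrow> Abs_ell2 (restr S (vf (ket y))) = ket y"
  by (metis restr_ell2_on ell2_on_ket vf_inverse)

definition bop_of :: "'i set \<Rightarrow> (('i \<Rightarrow> complex) \<Rightarrow> ('i \<Rightarrow> complex)) \<Rightarrow> 'i bop" where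
  "bop_of S F = bop_of_linear (\<lambda>v. Abs_ell2 (F (restr S (vf v))))"

lemma bounded_op_linear:
  assumes "bounded_op S F" "f \<in> l2 S" "g \<in> l2 S"
  shows "F (\<lambda>x. a * f x + b * g x) = (\<lambda>x. a * F f x + b * F g x)"
  using assms unfolding bounded_op_def by blast

lemma bounded_op_add: "bounded_op S F \<Longrightarrow> f \<in> l2 S \<Longrightarrow> g \<in> l2 S \<Longrightarrow> F (\<lambda>x. f x + g x) = (\<lambda>x. F f x + F g x)"
  using bounded_op_linear[of S F f g 1 1] by simp

lemma bounded_op_scale: "bounded_op S F \<Longrightarrow> f \<in> l2 S \<Longrightarrow> F (\<lambda>x. a * f x) = (\<lambda>x. a * F f x)"
proof -
  assume a: "bounded_op S F" "f \<in> l2 S"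
  have "F (\<lambda>x. a * f x + 0 * f x) = (\<lambda>x. a * F f x + 0 * F f x)" by (rule bounded_op_linear[OF a a(2)])
  thus ?thesis by simp
qed

lemma bounded_op_l2: "bounded_op S F \<Longrightarrow> f \<in> l2 S \<Longrightarrow> F f \<in> l2 S"
  unfolding bounded_op_def by blast

lemma restr_add: "restr S (vf (v + w)) = (\<lambda>x. restr S (vf v) x + restr S (vf w) x)"
  by (auto simp: restr_def vf_plus)

lemma restr_cscale: "restr S (vf (cscale c v)) = (\<lambda>x. c * restr S (vf v) x)"
  by (auto simp: restr_def vf_cscale)

lemma restr_scaleR: "restr S (vf (r *\<^sub>R v)) = (\<lambda>x. complex_of_real r * restr S (vf v) x)"
  by (auto simp: restr_def vf_scaleR)

lemma Abs_add_l2: "f \<in> l2 S \<Longrightarrow> g \<in> l2 S \<Longrightarrow> Abs_ell2 (\<lambda>x. f x + g x) = Abs_ell2 f + Abs_ell2 g"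
  by (rule vf_inject[THEN iffD1]) (simp add: vf_plus vf_Abs_l2 l2_def Abs_ell2_inverse sq_summable_add)

lemma Abs_scale_l2: "f \<in> l2 S \<Longrightarrow> Abs_ell2 (\<lambda>x. c * f x) = cscale c (Abs_ell2 f)"
  by (rule vf_inject[THEN iffD1]) (simp add: vf_cscale vf_Abs_l2 l2_def Abs_ell2_inverse sq_summable_scale)

lemma bop_apply_bop_of:
  assumes "bounded_op S F"
  shows "bop_apply (bop_of S F) v = Abs_ell2 (F (restr S (vf v)))"
proof -
  obtain C where C: "\<forall>f\<in>l2 S. l2_norm (F f) \<le> C * l2_norm f" using assms unfolding bounded_op_def by blast
  have Fl: "F (restr S (vf v)) \<in> l2 S" for v using bounded_op_l2[OF assms restr_l2] .
  have bl: "bounded_linear (\<lambda>v. Abs_ell2 (F (restr S (vf v))))"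
  proof (rule bounded_linear_intro[where K="max C 0"])
    fix v w :: "'a ell2" and r :: real
    show "Abs_ell2 (F (restr S (vf (v + w)))) = Abs_ell2 (F (restr S (vf v))) + Abs_ell2 (F (restr S (vf w)))"
      unfolding restr_add bounded_op_add[OF assms restr_l2 restr_l2] by (rule Abs_add_l2[OF Fl Fl])
    show "Abs_ell2 (F (restr S (vf (r *\<^sub>R v)))) = r *\<^sub>R Abs_ell2 (F (restr S (vf v)))"
      unfolding restr_scaleR bounded_op_scale[OF assms restr_l2] Abs_scale_l2[OF Fl] cscale_of_real ..
    have "norm (Abs_ell2 (F (restr S (vf v)))) = l2_norm (F (restr S (vf v)))" using l2_norm_eq[OF Fl] by simp
    also have "\<dots> \<le> C * l2_norm (restr S (vf v))" using C restr_l2 by blast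
    also have "\<dots> \<le> max C 0 * l2_norm (restr S (vf v))"
      by (intro mult_right_mono) (auto simp: l2_norm_def intro!: infsum_nonneg)
    also have "\<dots> \<le> max C 0 * norm v"
      using norm_restr[of S v] l2_norm_eq[OF restr_l2, of S v] by (intro mult_left_mono) auto
    finally show "norm (Abs_ell2 (F (restr S (vf v)))) \<le> norm v * max C 0" by (simp add: mult.commute)
  qed
  have cl: "Abs_ell2 (F (restr S (vf (cscale c v)))) = cscale c (Abs_ell2 (F (restr S (vf v))))" for c v
    unfolding restr_cscale bounded_op_scale[OF assms restr_l2] by (rule Abs_scale_l2[OF Fl])
  show ?thesis unfolding bop_of_def by (subst bop_apply_bop_of_linear[OF bl cl]) rule
qed

lemma bop_of_ell2_on: "bounded_op S F \<Longrightarrow> bop_apply (bop_of S F) v \<in> ell2_on S"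
  by (simp add: bop_apply_bop_of Abs_l2_ell2_on[OF bounded_op_l2[OF _ restr_l2]])

lemma preserves_bop_of: "bounded_op S F \<Longrightarrow> preserves S (bop_of S F)"
  by (simp add: preserves_def bop_of_ell2_on)

lemma represents_bop_of: assumes "bounded_op S F" shows "represents S F (bop_of S F)"
  unfolding represents_def preserves_def
proof (intro conjI ballI)
  fix v :: "'a ell2"
  show "bop_apply (bop_of S F) v \<in> ell2_on S" using assms by (rule bop_of_ell2_on)
next
  fix \<psi> assume "\<psi> \<in> l2 S"
  hence "restr S \<psi> = \<psi>" by (auto simp: restr_def l2_def fun_eq_iff)
  thus "F \<psi> = vf (bop_apply (bop_of S F) (Abs_ell2 \<psi>))"
    unfolding bop_apply_bop_of[OF assms] using \<open>\<psi> \<in> l2 S\<close> bounded_op_l2[OF assms \<open>\<psi> \<in> l2 S\<close>]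
    by (simp add: vf_Abs_l2)
qed

lemma bop_of_restr_cong: "bounded_op S F \<Longrightarrow> restr S (vf v) = restr S (vf w) \<Longrightarrow> bop_apply (bop_of S F) v = bop_apply (bop_of S F) w"
  by (simp add: bop_apply_bop_of)

lemma bop_of_ket_out: "bounded_op S F \<Longrightarrow> y \<notin> S \<Longrightarrow> bop_apply (bop_of S F) (ket y) = 0"
proof -
  assume a: "bounded_op S F" "y \<notin> S"
  have "restr S (vf (ket y)) = restr S (vf 0)" using a(2) by (auto simp: restr_def vf_ket vf_zero)
  hence "bop_apply (bop_of S F) (ket y) = bop_apply (bop_of S F) 0" by (rule bop_of_restr_cong[OF a(1)])
  thus ?thesis by simp
qed

lemma represents_bounded: assumes "represents S F W" shows "bounded_op S F"
proof -
  have pr: "preserves S W" and eq: "\<And>\<psi>. \<psi> \<in> l2 S \<Longrightarrow> F \<psi> = vf (bop_apply W (Abs_ell2 \<psi>))" using assms by (auto simp: represents_def)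
  have inl2: "F f \<in> l2 S" if "f \<in> l2 S" for f
    using pr Abs_l2_ell2_on[OF that] by (simp add: eq[OF that] vf_l2_iff preserves_def)
  show ?thesis unfolding bounded_op_def
  proof (intro conjI ballI allI exI)
    fix f assume "f \<in> l2 S" thus "F f \<in> l2 S" by (rule inl2)
  next
    fix f g a b assume fg: "f \<in> l2 S" "g \<in> l2 S"
    have l: "(\<lambda>x. a * f x) \<in> l2 S" "(\<lambda>x. b * g x) \<in> l2 S" using fg by (auto simp: l2_def sq_summable_scale)
    have s: "(\<lambda>x. a * f x + b * g x) \<in> l2 S" using l by (auto simp: l2_def sq_summable_add)
    show "F (\<lambda>x. a * f x + b * g x) = (\<lambda>x. a * F f x + b * F g x)"
      unfolding eq[OF s] eq[OF fg(1)] eq[OF fg(2)] Abs_add_l2[OF l] Abs_scale_l2[OF fg(1)] Abs_scale_l2[OF fg(2)]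
      by (simp add: bop_apply_add bop_apply_cscale vf_plus vf_cscale)
  next
    fix f assume "f \<in> l2 S"
    have "l2_norm (F f) = norm (bop_apply W (Abs_ell2 f))"
      using l2_norm_eq[OF inl2[OF \<open>f \<in> l2 S\<close>]] eq[OF \<open>f \<in> l2 S\<close>] by (simp add: vf_inverse)
    thus "l2_norm (F f) \<le> norm W * l2_norm f"
      unfolding l2_norm_eq[OF \<open>f \<in> l2 S\<close>] using bop_apply_norm by simp
  qed
qed

lemma represents_comp: assumes "represents S F W" "represents S G V" shows "represents S (F \<circ> G) (W * V)"
  using assms unfolding represents_def
  apply (intro conjI preserves_mult, simp_all)
  by (metis Abs_l2_ell2_on vf_inverse bop_apply_mult preserves_def vf_l2_iff)

lemma represents_id: "represents S id 1" by (simp add: represents_def preserves_one vf_Abs_l2)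

lemma represents_funpow: assumes "represents S F W" shows "represents S (F ^^ k) (W ^ k)"
proof (induction k)
  case 0 thus ?case using represents_id by (simp add: id_def)
next
  case (Suc k)
  have "represents S (F \<circ> F ^^ k) (W * W ^ k)" by (rule represents_comp[OF assms Suc])
  thus ?case by (metis funpow.simps(2) power_Suc)
qed

lemma represents_exp: assumes "represents S F W" shows "represents S (op_exp F) (exp W)"
  unfolding represents_def
proof (intro conjI ballI)
  show "preserves S (exp W)" using assms by (simp add: represents_def preserves_exp)
  fix \<psi> assume "\<psi> \<in> l2 S"
  have "(F ^^ k) \<psi> = vf (bop_apply (W ^ k) (Abs_ell2 \<psi>))" for k
    using represents_funpow[OF assms, of k] \<open>\<psi> \<in> l2 S\<close> by (simp add: represents_def)
  thus "op_exp F \<psi> = vf (bop_apply (exp W) (Abs_ell2 \<psi>))"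
    unfolding op_exp_def using exp_sums_pointwise[of W "Abs_ell2 \<psi>"] by (simp add: fun_eq_iff sums_iff)
qed

lemma represents_sum:
  assumes "\<And>i. i \<in> I \<Longrightarrow> represents S (F i) (W i)"
  shows "represents S (\<lambda>\<phi> x. \<Sum>i\<in>I. F i \<phi> x) (\<Sum>i\<in>I. W i)"
  using assms unfolding represents_def by (auto intro!: preserves_sum simp: bop_apply_sum_op vf_sum)

lemma represents_scale:
  assumes "represents S F W" shows "represents S (\<lambda>\<phi> x. c * F \<phi> x) (cscale_op c * W)"
  using assms unfolding represents_def by (auto intro!: preserves_mult preserves_cscale_op simp: bop_apply_mult bop_apply_cscale_op vf_cscale)

lemma represents_scalar:
  assumes "scalar_op S F r" shows "represents S F (r *\<^sub>R 1)"
  using assms unfolding represents_def scalar_op_def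
  by (auto intro!: preserves_scaleR preserves_one simp: bop_apply_scaleR_op vf_scaleR vf_Abs_l2)

lemma represents_foldr:
  assumes "\<And>k. k \<in> set xs \<Longrightarrow> represents S (E k) (Wf k)"
  shows "represents S (foldr (\<circ>) (map E xs) id) (prod_list (map Wf xs))"
  using assms by (induction xs) (auto intro: represents_comp represents_id)

lemma represents_bop_apply: "represents S F W \<Longrightarrow> \<psi> \<in> l2 S \<Longrightarrow> Abs_ell2 (F \<psi>) = bop_apply W (Abs_ell2 \<psi>)"
  by (simp add: represents_def vf_inverse)

lemma represents_unique:
  "represents S F W \<Longrightarrow> represents S F V \<Longrightarrow> v \<in> ell2_on S \<Longrightarrow> bop_apply W v = bop_apply V v"
  unfolding represents_def by (metis vf_inverse vf_inject vf_l2_iff)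

section \<open>Operators acting on a single tensor factor\<close>

lemma tuples_upd: "x \<in> tuples n D \<Longrightarrow> j < n \<Longrightarrow> z \<in> D j \<Longrightarrow> x(j:=z) \<in> tuples n D"
  by (auto simp: tuples_def)

lemma tuples_in: "x \<in> tuples n D \<Longrightarrow> j < n \<Longrightarrow> x j \<in> D j"
  by (auto simp: tuples_def)

lemma tuples_eqI: "x \<in> tuples n D \<Longrightarrow> y \<in> tuples n D \<Longrightarrow> (\<forall>m<n. x m = y m) \<Longrightarrow> x = y"
  by (auto simp: tuples_def fun_eq_iff) (metis not_le)

definition slice_coeffs :: "(nat \<Rightarrow> nat set) \<Rightarrow> nat \<Rightarrow> (nat \<Rightarrow> nat) \<Rightarrow> (nat \<Rightarrow> nat) ell2 \<Rightarrow> nat \<Rightarrow> complex" where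
  "slice_coeffs D j x v = (\<lambda>z. if z \<in> D j then vf v (x(j:=z)) else 0)"

lemma inj_on_fun_upd: "inj_on (\<lambda>z. x(j:=z)) Z"
  by (rule inj_onI) (metis fun_upd_same)

lemma slice_coeffs_finite: assumes "finite Z" shows "(\<Sum>z\<in>Z. (cmod (slice_coeffs D j x v z))^2) \<le> (norm v)^2"
proof -
  have "(\<Sum>z\<in>Z. (cmod (slice_coeffs D j x v z))^2) \<le> (\<Sum>z\<in>Z. (cmod (vf v (x(j:=z))))^2)"
    by (rule sum_mono) (simp add: slice_coeffs_def)
  also have "\<dots> = (\<Sum>y\<in>(\<lambda>z. x(j:=z)) ` Z. (cmod (vf v y))^2)"
    by (simp add: sum.reindex[OF inj_on_fun_upd] o_def)
  also have "\<dots> \<le> (norm v)^2" using assms by (intro sum_sq_le_norm) simp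
  finally show ?thesis .
qed

lemma slice_coeffs_summable: "(\<lambda>z. (cmod (slice_coeffs D j x v z))^2) summable_on UNIV"
  by (rule sq_summable_if_bounded[OF slice_coeffs_finite])

definition slice :: "(nat \<Rightarrow> nat set) \<Rightarrow> nat \<Rightarrow> (nat \<Rightarrow> nat) \<Rightarrow> (nat \<Rightarrow> nat) ell2 \<Rightarrow> nat ell2" where
  "slice D j x v = Abs_ell2 (slice_coeffs D j x v)"

lemma vf_slice: "vf (slice D j x v) = slice_coeffs D j x v"
  unfolding slice_def using slice_coeffs_summable by (simp add: Abs_ell2_inverse)

lemma slice_ell2_on: "slice D j x v \<in> ell2_on (D j)"
  by (simp add: ell2_on_def vf_slice slice_coeffs_def)

lemma slice_upd: "slice D j (x(j:=w)) v = slice D j x v"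
proof -
  have "\<And>z. x(j:=w, j:=z) = x(j:=z)" by simp
  thus ?thesis unfolding slice_def slice_coeffs_def by presburger
qed

lemma slice_add: "slice D j x (v + w) = slice D j x v + slice D j x w"
  by (rule ell2_eqI) (simp add: vf_slice vf_plus slice_coeffs_def)

lemma slice_cscale: "slice D j x (cscale c v) = cscale c (slice D j x v)"
  by (rule ell2_eqI) (simp add: vf_slice vf_cscale slice_coeffs_def)

lemma slice_scaleR: "slice D j x (r *\<^sub>R v) = r *\<^sub>R slice D j x v"
  by (rule ell2_eqI) (simp add: vf_slice vf_scaleR slice_coeffs_def)

lemma inj_on_fun_upd_pairs:
  assumes "\<And>r. r \<in> R \<Longrightarrow> r j = 0"
  shows "inj_on (\<lambda>(r, z). r(j := z)) (R \<times> Z)"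
proof (rule inj_onI, clarify)
  fix r z r' z' assume a: "r \<in> R" "r' \<in> R" "r(j := z) = r'(j := z')"
  then have "z = z'" by (metis fun_upd_same)
  moreover have "r k = r' k" for k
    using a(1,2) assms[of r] assms[of r'] fun_cong[OF a(3), of k] by (cases "k = j") simp_all
  ultimately show "r = r' \<and> z = z'" by auto
qed

lemma sum_norm_slice:
  assumes "finite R" "\<And>r. r \<in> R \<Longrightarrow> r j = 0"
  shows "(\<Sum>r\<in>R. (norm (slice D j r v))^2) \<le> (norm v)^2"
proof -
  define h where "h r z = (cmod (slice_coeffs D j r v z))^2" for r z
  have "((\<lambda>z. \<Sum>r\<in>R. h r z) has_sum (\<Sum>r\<in>R. infsum (h r) UNIV)) UNIV"
    by (rule has_sum_finite_sum[OF assms(1)]) (simp add: h_def slice_coeffs_summable)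
  then have "(\<Sum>r\<in>R. infsum (h r) UNIV) \<le> (norm v)^2"
  proof (rule has_sum_le_finite_sums)
    fix Z :: "nat set" assume "finite Z" "Z \<subseteq> UNIV"
    have "(\<Sum>z\<in>Z. \<Sum>r\<in>R. h r z) = (\<Sum>r\<in>R. \<Sum>z\<in>Z. h r z)"
      by (rule sum.swap)
    also have "\<dots> = (\<Sum>(r,z)\<in>R \<times> Z. h r z)"
      by (simp add: sum.cartesian_product)
    also have "\<dots> \<le> (\<Sum>(r,z)\<in>R \<times> Z. (cmod (vf v (r(j:=z))))^2)"
      by (rule sum_mono) (auto simp: h_def slice_coeffs_def)
    also have "\<dots> = (\<Sum>y\<in>(\<lambda>(r, z). r(j:=z)) ` (R \<times> Z). (cmod (vf v y))^2)"
      by (rule sym, rule sum.reindex_cong[OF inj_on_fun_upd_pairs[OF assms(2)]]) auto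
    also have "\<dots> \<le> (norm v)^2" using assms(1) \<open>finite Z\<close> by (intro sum_sq_le_norm) simp
    finally show "(\<Sum>z\<in>Z. \<Sum>r\<in>R. h r z) \<le> (norm v)^2" .
  qed
  moreover have "(norm (slice D j r v))^2 = infsum (h r) UNIV" for r
    unfolding norm_ell2_sq vf_slice h_def ..
  ultimately show ?thesis by simp
qed

(* Coefficients of (I \<otimes> ... \<otimes> W \<otimes> ... \<otimes> I) v with W in position j: at a tuple x, W is applied
   to the slice z \<mapsto> v (x(j := z)). *)
definition lift_coeffs :: "nat \<Rightarrow> (nat \<Rightarrow> nat set) \<Rightarrow> nat \<Rightarrow> nat bop \<Rightarrow> (nat \<Rightarrow> nat) ell2 \<Rightarrow> (nat \<Rightarrow> nat) \<Rightarrow> complex" where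
  "lift_coeffs n D j W v = (\<lambda>x. if x \<in> tuples n D then vf (bop_apply W (slice D j x v)) (x j) else 0)"

lemma sum_fiber_le:
  assumes "finite G" "\<And>x. x \<in> G \<Longrightarrow> x(j := 0) = r"
  shows "(\<Sum>x\<in>G. (cmod (vf (bop_apply W (slice D j x v)) (x j)))^2) \<le> (norm W)^2 * (norm (slice D j r v))^2"
proof -
  have sl: "slice D j x v = slice D j r v" if "x \<in> G" for x
    using slice_upd[of D j x 0 v] assms(2)[OF that] by simp
  have "inj_on (\<lambda>x. x j) G"
  proof (rule inj_onI)
    fix x x' assume a: "x \<in> G" "x' \<in> G" "x j = x' j"
    show "x = x'"
    proof
      fix k
      show "x k = x' k"
        using a(3) fun_cong[OF trans[OF assms(2)[OF a(1)] sym[OF assms(2)[OF a(2)]]], of k]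
        by (cases "k = j") auto
    qed
  qed
  then have "(\<Sum>x\<in>G. (cmod (vf (bop_apply W (slice D j x v)) (x j)))^2)
      = (\<Sum>z\<in>(\<lambda>x. x j) ` G. (cmod (vf (bop_apply W (slice D j r v)) z))^2)"
    by (simp add: sum.reindex sl)
  also have "\<dots> \<le> (norm (bop_apply W (slice D j r v)))^2"
    using assms(1) by (intro sum_sq_le_norm) simp
  also have "\<dots> \<le> (norm W * norm (slice D j r v))^2"
    by (rule power_mono[OF bop_apply_norm]) simp
  finally show ?thesis by (simp add: power_mult_distrib)
qed

lemma lift_coeffs_finite:
  assumes "finite F"
  shows "(\<Sum>x\<in>F. (cmod (lift_coeffs n D j W v x))^2) \<le> (norm W * norm v)^2"
proof -
  define G where "G = F \<inter> tuples n D"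
  define h where "h x = (cmod (vf (bop_apply W (slice D j x v)) (x j)))^2" for x
  have "finite G" using assms by (simp add: G_def)
  have "(\<Sum>x\<in>F. (cmod (lift_coeffs n D j W v x))^2) = (\<Sum>x\<in>F. if x \<in> tuples n D then h x else 0)"
    by (rule sum.cong) (auto simp: lift_coeffs_def h_def)
  also have "\<dots> = sum h G" unfolding G_def using assms by (simp add: sum.inter_restrict)
  also have "\<dots> = (\<Sum>r\<in>(\<lambda>x. x(j := 0)) ` G. sum h {x \<in> G. x(j := 0) = r})"
    using \<open>finite G\<close> by (rule sum.image_gen)
  also have "\<dots> \<le> (\<Sum>r\<in>(\<lambda>x. x(j := 0)) ` G. (norm W)^2 * (norm (slice D j r v))^2)"
    unfolding h_def using \<open>finite G\<close> by (intro sum_mono sum_fiber_le) auto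
  also have "\<dots> \<le> (norm W)^2 * (norm v)^2"
    unfolding sum_distrib_left[symmetric] using \<open>finite G\<close>
    by (intro mult_left_mono sum_norm_slice) auto
  finally show ?thesis by (simp add: power_mult_distrib)
qed

lemma lift_coeffs_summable: "(\<lambda>x. (cmod (lift_coeffs n D j W v x))^2) summable_on UNIV"
  by (rule sq_summable_if_bounded[OF lift_coeffs_finite])

lemma vf_Abs_lift_coeffs: "vf (Abs_ell2 (lift_coeffs n D j W v)) = lift_coeffs n D j W v"
  using lift_coeffs_summable by (simp add: Abs_ell2_inverse)

definition lift :: "nat \<Rightarrow> (nat \<Rightarrow> nat set) \<Rightarrow> nat \<Rightarrow> nat bop \<Rightarrow> (nat \<Rightarrow> nat) bop" where
  "lift n D j W = bop_of_linear (\<lambda>v. Abs_ell2 (lift_coeffs n D j W v))"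

lemma bop_apply_lift: "bop_apply (lift n D j W) = (\<lambda>v. Abs_ell2 (lift_coeffs n D j W v))"
  unfolding lift_def
proof (rule bop_apply_bop_of_linear)
  show "bounded_linear (\<lambda>v. Abs_ell2 (lift_coeffs n D j W v))"
  proof (rule bounded_linear_intro[where K="norm W"])
    fix v w :: "(nat \<Rightarrow> nat) ell2" and r :: real
    show "Abs_ell2 (lift_coeffs n D j W (v + w)) = Abs_ell2 (lift_coeffs n D j W v) + Abs_ell2 (lift_coeffs n D j W w)"
      by (rule ell2_eqI) (simp only: vf_Abs_lift_coeffs vf_plus, simp add: lift_coeffs_def slice_add bop_apply_add vf_plus)
    show "Abs_ell2 (lift_coeffs n D j W (r *\<^sub>R v)) = r *\<^sub>R Abs_ell2 (lift_coeffs n D j W v)"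
      by (rule ell2_eqI) (simp only: vf_Abs_lift_coeffs vf_scaleR, simp add: lift_coeffs_def slice_scaleR bop_apply_scaleR vf_scaleR)
    show "norm (Abs_ell2 (lift_coeffs n D j W v)) \<le> norm v * norm W"
      by (rule norm_le_if_sums_le) (auto simp: vf_Abs_lift_coeffs lift_coeffs_finite mult.commute)
  qed
  show "Abs_ell2 (lift_coeffs n D j W (cscale c v)) = cscale c (Abs_ell2 (lift_coeffs n D j W v))" for c v
    by (rule ell2_eqI) (simp only: vf_Abs_lift_coeffs vf_cscale, simp add: lift_coeffs_def slice_cscale bop_apply_cscale vf_cscale)
qed

lemma vf_bop_apply_lift: "vf (bop_apply (lift n D j W) v) = lift_coeffs n D j W v"
  by (simp add: bop_apply_lift vf_Abs_lift_coeffs)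

lemma lift_add: "lift n D j (W + V) = lift n D j W + lift n D j V"
  by (intro bop_eqI ell2_eqI) (simp add: bop_apply_plus_op vf_plus vf_bop_apply_lift lift_coeffs_def)

lemma lift_scaleR: "lift n D j (r *\<^sub>R W) = r *\<^sub>R lift n D j W"
  by (intro bop_eqI ell2_eqI) (simp add: bop_apply_scaleR_op vf_scaleR vf_bop_apply_lift lift_coeffs_def)

lemma lift_zero: "lift n D j 0 = 0"
  by (intro bop_eqI ell2_eqI) (simp add: vf_zero vf_bop_apply_lift lift_coeffs_def)

lemma lift_cscale_op: "lift n D j (cscale_op c * W) = cscale_op c * lift n D j W"
  by (intro bop_eqI ell2_eqI) (simp add: bop_apply_mult bop_apply_cscale_op vf_cscale vf_bop_apply_lift lift_coeffs_def)

lemma lift_sum: "lift n D j (sum f I) = (\<Sum>i\<in>I. lift n D j (f i))"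
  by (induction I rule: infinite_finite_induct) (auto simp: lift_zero lift_add)

lemma lift_ell2_on: "bop_apply (lift n D j W) v \<in> ell2_on (tuples n D)"
  by (simp add: ell2_on_def vf_bop_apply_lift lift_coeffs_def)

lemma preserves_lift: "preserves (tuples n D) (lift n D j W)"
  by (simp add: preserves_def lift_ell2_on)

lemma slice_lift:
  assumes "j < n" "x \<in> tuples n D" "preserves (D j) V"
  shows "slice D j x (bop_apply (lift n D j V) v) = bop_apply V (slice D j x v)"
proof (rule ell2_eqI)
  fix z
  have inV: "bop_apply V (slice D j x v) \<in> ell2_on (D j)" using assms(3) slice_ell2_on by (auto simp: preserves_def)
  show "vf (slice D j x (bop_apply (lift n D j V) v)) z = vf (bop_apply V (slice D j x v)) z"
  proof (cases "z \<in> D j")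
    case True
    thus ?thesis using tuples_upd[OF assms(2,1) True]
      by (simp add: vf_slice slice_coeffs_def vf_bop_apply_lift lift_coeffs_def slice_upd)
  next
    case False
    thus ?thesis using inV by (simp add: vf_slice slice_coeffs_def ell2_on_def)
  qed
qed

lemma lift_mult:
  assumes "j < n" "preserves (D j) V"
  shows "lift n D j (W * V) = lift n D j W * lift n D j V"
proof (intro bop_eqI ell2_eqI)
  fix v x
  show "vf (bop_apply (lift n D j (W * V)) v) x = vf (bop_apply (lift n D j W * lift n D j V) v) x"
  proof (cases "x \<in> tuples n D")
    case True thus ?thesis by (simp add: bop_apply_mult vf_bop_apply_lift lift_coeffs_def slice_lift[OF assms(1) True assms(2)])
  next
    case False thus ?thesis by (simp add: bop_apply_mult vf_bop_apply_lift lift_coeffs_def)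
  qed
qed

lemma bop_apply_lift_one:
  assumes "j < n" "v \<in> ell2_on (tuples n D)"
  shows "bop_apply (lift n D j 1) v = v"
proof (rule ell2_eqI)
  fix x show "vf (bop_apply (lift n D j 1) v) x = vf v x"
    using assms tuples_in[of x n D j] by (auto simp: vf_bop_apply_lift lift_coeffs_def vf_slice slice_coeffs_def ell2_on_def)
qed

lemma lift_cong:
  assumes "\<And>u. u \<in> ell2_on (D j) \<Longrightarrow> bop_apply W u = bop_apply V u"
  shows "lift n D j W = lift n D j V"
  by (intro bop_eqI ell2_eqI) (simp add: vf_bop_apply_lift lift_coeffs_def assms slice_ell2_on)

lemma lift_scaleR_one:
  assumes "m < n" "v \<in> ell2_on (tuples n D)"
  shows "bop_apply (lift n D m (r *\<^sub>R 1)) v = r *\<^sub>R v"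
  by (simp add: lift_scaleR bop_apply_scaleR_op bop_apply_lift_one[OF assms])

lemma bop_apply_lift_power:
  assumes "j < n" "preserves (D j) Z" "v \<in> ell2_on (tuples n D)"
  shows "bop_apply ((lift n D j Z) ^ k) v = bop_apply (lift n D j (Z ^ k)) v"
proof (induction k)
  case 0 thus ?case using bop_apply_lift_one[OF assms(1,3)] by simp
next
  case (Suc k)
  have "bop_apply ((lift n D j Z) ^ Suc k) v = bop_apply (lift n D j Z) (bop_apply (lift n D j (Z ^ k)) v)"
    by (simp add: bop_apply_mult Suc)
  also have "\<dots> = bop_apply (lift n D j (Z * Z ^ k)) v"
  proof -
    have p: "preserves (D j) (Z ^ k)" by (rule preserves_power[OF assms(2)])
    show ?thesis by (simp add: lift_mult[where j=j and n=n and D=D and V="Z^k" and W=Z, OF assms(1) p] bop_apply_mult)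
  qed
  finally show ?case by simp
qed

lemma lift_exp:
  assumes "j < n" "preserves (D j) Z" "v \<in> ell2_on (tuples n D)"
  shows "bop_apply (lift n D j (exp Z)) v = bop_apply (exp (lift n D j Z)) v"
proof (rule ell2_eqI)
  fix x
  have s: "(\<lambda>k. vf (bop_apply (lift n D j (Z ^ k)) v) x / of_nat (fact k)) sums vf (bop_apply (exp (lift n D j Z)) v) x"
    using exp_sums_pointwise[of "lift n D j Z" v x] by (simp add: bop_apply_lift_power[OF assms])
  show "vf (bop_apply (lift n D j (exp Z)) v) x = vf (bop_apply (exp (lift n D j Z)) v) x"
  proof (cases "x \<in> tuples n D")
    case True
    have "(\<lambda>k. vf (bop_apply (Z ^ k) (slice D j x v)) (x j) / of_nat (fact k)) sums vf (bop_apply (exp Z) (slice D j x v)) (x j)"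
      by (rule exp_sums_pointwise)
    thus ?thesis using s True by (simp add: vf_bop_apply_lift lift_coeffs_def sums_iff)
  next
    case False
    thus ?thesis using s by (simp add: vf_bop_apply_lift lift_coeffs_def sums_iff)
  qed
qed

lemma slice_ket:
  assumes "y \<in> tuples n D" "j < n"
  shows "slice D j y (ket y) = ket (y j)"
proof (rule ell2_eqI)
  fix w
  have "y(j:=w) = y \<longleftrightarrow> w = y j" by (metis fun_upd_same fun_upd_triv)
  thus "vf (slice D j y (ket y)) w = vf (ket (y j)) w"
    using tuples_in[OF assms] by (auto simp: vf_slice slice_coeffs_def vf_ket)
qed

lemma lift_ket:
  assumes "y \<in> tuples n D" "j < n" "z \<in> D j"
  shows "vf (bop_apply (lift n D j W) (ket y)) (y(j:=z)) = vf (bop_apply W (ket (y j))) z"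
  using tuples_upd[OF assms(1,2,3)] slice_upd[of D j y z "ket y"]
  by (simp add: vf_bop_apply_lift lift_coeffs_def slice_ket[OF assms(1,2)])

definition tensor_vec :: "nat \<Rightarrow> (nat \<Rightarrow> nat set) \<Rightarrow> (nat \<Rightarrow> nat ell2) \<Rightarrow> (nat \<Rightarrow> nat) \<Rightarrow> complex" where
  "tensor_vec n D f = (\<lambda>x. if x \<in> tuples n D then \<Prod>m<n. vf (f m) (x m) else 0)"

lemma prod_lessThan_split:
  fixes n :: nat
  assumes "j < n" "\<And>m. m < n \<Longrightarrow> m \<noteq> j \<Longrightarrow> g m = h m" "g j = a"
  shows "(\<Prod>m<n. g m) = a * (\<Prod>m\<in>{..<n}-{j}. h m)"
proof -
  have "(\<Prod>m<n. g m) = g j * (\<Prod>m\<in>{..<n}-{j}. g m)"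
    by (rule prod.remove) (use assms(1) in auto)
  hence "(\<Prod>m<n. g m) = a * (\<Prod>m\<in>{..<n}-{j}. g m)" using assms(3) by simp
  also have "(\<Prod>m\<in>{..<n}-{j}. g m) = (\<Prod>m\<in>{..<n}-{j}. h m)"
    by (rule prod.cong) (auto simp: assms(2))
  finally show ?thesis .
qed

lemma lift_tensor_vec:
  assumes "j < n" "vf v = tensor_vec n D f"
  shows "vf (bop_apply (lift n D j W) v) = tensor_vec n D (f(j := bop_apply W (Abs_ell2 (restr (D j) (vf (f j))))))"
proof (rule ext)
  fix x
  define u where "u = Abs_ell2 (restr (D j) (vf (f j)))"
  have vfu: "vf u = restr (D j) (vf (f j))" unfolding u_def by (rule vf_Abs_l2[OF restr_l2])
  show "vf (bop_apply (lift n D j W) v) x = tensor_vec n D (f(j := bop_apply W u)) x"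
  proof (cases "x \<in> tuples n D")
    case False thus ?thesis by (simp add: vf_bop_apply_lift lift_coeffs_def tensor_vec_def)
  next
    case xT: True
    define c where "c = (\<Prod>m\<in>{..<n}-{j}. vf (f m) (x m))"
    have sl: "slice D j x v = cscale c u"
    proof (rule ell2_eqI)
      fix z
      show "vf (slice D j x v) z = vf (cscale c u) z"
      proof (cases "z \<in> D j")
        case False thus ?thesis by (simp add: vf_slice slice_coeffs_def vf_cscale vfu restr_def)
      next
        case True
        have xt: "x(j:=z) \<in> tuples n D" by (rule tuples_upd[OF xT assms(1) True])
        have "(\<Prod>m<n. vf (f m) ((x(j:=z)) m)) = vf (f j) z * c"
          unfolding c_def by (rule prod_lessThan_split[OF assms(1)]) simp_all
        thus ?thesis using True xt by (simp add: vf_slice slice_coeffs_def vf_cscale vfu restr_def assms(2) tensor_vec_def mult.commute)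
      qed
    qed
    have "vf (bop_apply (lift n D j W) v) x = c * vf (bop_apply W u) (x j)"
      using xT by (simp add: vf_bop_apply_lift lift_coeffs_def sl bop_apply_cscale vf_cscale)
    also have "\<dots> = vf (bop_apply W u) (x j) * c" by (rule mult.commute)
    also have "\<dots> = (\<Prod>m<n. vf ((f(j := bop_apply W u)) m) (x m))"
      unfolding c_def by (rule prod_lessThan_split[OF assms(1), symmetric]) simp_all
    also have "\<dots> = tensor_vec n D (f(j := bop_apply W u)) x" using xT by (simp add: tensor_vec_def)
    finally show ?thesis .
  qed
qed

lemma ket_tensor_vec: assumes "y \<in> tuples n D" shows "vf (ket y) = tensor_vec n D (\<lambda>m. ket (y m))"
proof (rule ext)
  fix x
  show "vf (ket y) x = tensor_vec n D (\<lambda>m. ket (y m)) x"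
  proof (cases "x \<in> tuples n D")
    case False
    hence "x \<noteq> y" using assms by auto
    thus ?thesis using False by (simp add: vf_ket tensor_vec_def)
  next
    case True
    show ?thesis
    proof (cases "x = y")
      case True thus ?thesis using assms by (simp add: vf_ket tensor_vec_def)
    next
      case False
      then obtain m where m: "m < n" "x m \<noteq> y m" using tuples_eqI[OF True assms] by blast
      have "(\<Prod>m<n. vf (ket (y m)) (x m)) = 0"
        by (rule prod_zero) (use m in \<open>auto simp: vf_ket\<close>)
      thus ?thesis using False True by (simp add: vf_ket tensor_vec_def)
    qed
  qed
qed

lemma lift_ket_out:
  assumes "y \<notin> tuples n D" "j < n"
  shows "bop_apply (lift n D j W) (ket y) = 0"
proof (rule ell2_eqI)
  fix x
  have "slice D j x (ket y) = 0" if "x \<in> tuples n D" for x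
  proof (rule ell2_eqI)
    fix z
    have "z \<in> D j \<Longrightarrow> x(j:=z) \<noteq> y" using tuples_upd[OF that assms(2)] assms(1) by auto
    thus "vf (slice D j x (ket y)) z = vf 0 z" by (auto simp: vf_slice slice_coeffs_def vf_ket vf_zero)
  qed
  thus "vf (bop_apply (lift n D j W) (ket y)) x = vf 0 x" by (simp add: vf_bop_apply_lift lift_coeffs_def vf_zero)
qed

lemma lift_commute:
  assumes "i < n" "j < n" "i \<noteq> j"
  shows "lift n D i W * lift n D j V = lift n D j V * lift n D i W"
proof (rule bop_eq_ket)
  fix y
  show "bop_apply (lift n D i W * lift n D j V) (ket y) = bop_apply (lift n D j V * lift n D i W) (ket y)"
  proof (cases "y \<in> tuples n D")
    case False thus ?thesis using assms by (simp add: bop_apply_mult lift_ket_out)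
  next
    case True
    have yi: "y i \<in> D i" and yj: "y j \<in> D j" using True assms tuples_in by auto
    define f where "f = (\<lambda>m. ket (y m))"
    have k: "vf (ket y) = tensor_vec n D f" unfolding f_def by (rule ket_tensor_vec[OF True])
    have 1: "vf (bop_apply (lift n D i W * lift n D j V) (ket y)) = tensor_vec n D (f(j := bop_apply V (ket (y j)), i := bop_apply W (ket (y i))))"
      unfolding bop_apply_mult
      by (subst lift_tensor_vec[OF assms(1) lift_tensor_vec[OF assms(2) k]]) (use assms yi yj in \<open>simp add: f_def restr_ket\<close>)
    have 2: "vf (bop_apply (lift n D j V * lift n D i W) (ket y)) = tensor_vec n D (f(i := bop_apply W (ket (y i)), j := bop_apply V (ket (y j))))"
      unfolding bop_apply_mult
      by (subst lift_tensor_vec[OF assms(2) lift_tensor_vec[OF assms(1) k]]) (use assms yi yj in \<open>simp add: f_def restr_ket\<close>)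
    show ?thesis using 1 2 assms(3) by (simp add: vf_inject[symmetric] fun_upd_twist)
  qed
qed

lemma prod_list_lift_ket:
  assumes "distinct xs" "set xs \<subseteq> {..<n}" "y \<in> tuples n D"
  shows "vf (bop_apply (prod_list (map (\<lambda>j. lift n D j (Wb j)) xs)) (ket y))
         = tensor_vec n D (\<lambda>m. if m \<in> set xs then bop_apply (Wb m) (ket (y m)) else ket (y m))"
  using assms(1,2)
proof (induction xs)
  case Nil thus ?case using ket_tensor_vec[OF assms(3)] by simp
next
  case (Cons a xs)
  have a: "a < n" "a \<notin> set xs" using Cons.prems by auto
  have ya: "y a \<in> D a" using tuples_in[OF assms(3) a(1)] .
  have IH: "vf (bop_apply (prod_list (map (\<lambda>j. lift n D j (Wb j)) xs)) (ket y))
         = tensor_vec n D (\<lambda>m. if m \<in> set xs then bop_apply (Wb m) (ket (y m)) else ket (y m))"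
    using Cons by auto
  have "vf (bop_apply (prod_list (map (\<lambda>j. lift n D j (Wb j)) (a # xs))) (ket y))
      = tensor_vec n D ((\<lambda>m. if m \<in> set xs then bop_apply (Wb m) (ket (y m)) else ket (y m))
          (a := bop_apply (Wb a) (Abs_ell2 (restr (D a) (vf (if a \<in> set xs then bop_apply (Wb a) (ket (y a)) else ket (y a)))))))"
    by (simp add: bop_apply_mult lift_tensor_vec[OF a(1) IH])
  also have "\<dots> = tensor_vec n D (\<lambda>m. if m \<in> set (a # xs) then bop_apply (Wb m) (ket (y m)) else ket (y m))"
    using a ya by (intro arg_cong[where f="tensor_vec n D"]) (auto simp: restr_ket fun_eq_iff)
  finally show ?case .
qed

lemma prod_list_lift_scalars:
  assumes "distinct xs" "set xs \<subseteq> {..<n}" "v \<in> ell2_on (tuples n D)"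
    "\<And>m. m \<in> set xs \<Longrightarrow> m \<noteq> j \<Longrightarrow> lift n D m (W m) = lift n D m (lam m *\<^sub>R 1)"
  shows "bop_apply (\<Prod>m\<leftarrow>xs. lift n D m (W m)) v
       = (\<Prod>m\<in>set xs - {j}. lam m) *\<^sub>R (if j \<in> set xs then bop_apply (lift n D j (W j)) v else v)"
  using assms(1,2,4)
proof (induction xs)
  case Nil thus ?case by simp
next
  case (Cons a xs)
  have a: "a < n" "a \<notin> set xs" using Cons.prems by auto
  define u where "u = (if j \<in> set xs then bop_apply (lift n D j (W j)) v else v)"
  have IH: "bop_apply (\<Prod>m\<leftarrow>xs. lift n D m (W m)) v = (\<Prod>m\<in>set xs - {j}. lam m) *\<^sub>R u"
    using Cons by (auto simp: u_def)
  have u: "u \<in> ell2_on (tuples n D)"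
    using assms(3) lift_ell2_on by (auto simp: u_def)
  show ?case
  proof (cases "a = j")
    case True
    have "set (a # xs) - {j} = set xs - {j}" using True by auto
    thus ?thesis using True a IH by (simp add: u_def bop_apply_mult bop_apply_scaleR)
  next
    case False
    have "insert a (set xs) - {j} = insert a (set xs - {j})" using False by auto
    hence p: "(\<Prod>m\<in>insert a (set xs) - {j}. lam m) = lam a * (\<Prod>m\<in>set xs - {j}. lam m)"
      using a(2) by simp
    have "bop_apply (\<Prod>m\<leftarrow>a # xs. lift n D m (W m)) v
        = bop_apply (lift n D a (lam a *\<^sub>R 1)) ((\<Prod>m\<in>set xs - {j}. lam m) *\<^sub>R u)"
      using Cons.prems(3)[of a] False IH by (simp add: bop_apply_mult)
    also have "\<dots> = lam a *\<^sub>R ((\<Prod>m\<in>set xs - {j}. lam m) *\<^sub>R u)"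
      by (rule lift_scaleR_one[OF a(1) ell2_on_scaleR[OF u]])
    finally show ?thesis using False a by (simp add: p u_def)
  qed
qed

lemma lift_injective:
  assumes "tuples n D \<noteq> {}" "j < n" "preserves (D j) W" "preserves (D j) V"
    and off: "\<And>w. w \<notin> D j \<Longrightarrow> bop_apply W (ket w) = bop_apply V (ket w)"
    and lifted: "\<And>v. v \<in> ell2_on (tuples n D) \<Longrightarrow> bop_apply (lift n D j W) v = bop_apply (lift n D j V) v"
  shows "W = V"
proof (rule bop_eq_ket)
  fix w
  show "bop_apply W (ket w) = bop_apply V (ket w)"
  proof (cases "w \<in> D j")
    case False
    then show ?thesis by (rule off)
  next
    case w: True
    obtain x where "x \<in> tuples n D" using assms(1) by blast
    then have y: "x(j := w) \<in> tuples n D" using assms(2) w by (rule tuples_upd)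
    show ?thesis
    proof (rule ell2_eqI)
      fix z
      show "vf (bop_apply W (ket w)) z = vf (bop_apply V (ket w)) z"
      proof (cases "z \<in> D j")
        case True
        then show ?thesis
          using lift_ket[OF y assms(2) True, of W] lift_ket[OF y assms(2) True, of V]
            lifted[OF ell2_on_ket[OF y]] by simp
      next
        case False
        then show ?thesis using assms(3,4) ell2_on_ket[OF w] by (auto simp: preserves_def ell2_on_def)
      qed
    qed
  qed
qed

lemma prod_list_lift_ket_coeffs:
  assumes "\<And>j. j < n \<Longrightarrow> represents (D j) (B j) (W j)" "y \<in> tuples n D"
  shows "vf (bop_apply (\<Prod>j\<leftarrow>[0..<n]. lift n D j (W j)) (ket y)) x
       = (if x \<in> tuples n D then \<Prod>m<n. B m (basis (y m)) (x m) else 0)"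
proof -
  have "vf (bop_apply (W m) (ket (y m))) = B m (basis (y m))" if "m < n" for m
    using assms(1)[OF that] basis_l2[OF tuples_in[OF assms(2) that]] unfolding represents_def
    by (simp add: Abs_basis)
  moreover have "vf (bop_apply (\<Prod>j\<leftarrow>[0..<n]. lift n D j (W j)) (ket y)) x
      = tensor_vec n D (\<lambda>m. if m \<in> set [0..<n] then bop_apply (W m) (ket (y m)) else ket (y m)) x"
    using assms(2) by (subst prod_list_lift_ket) auto
  ultimately show ?thesis by (simp add: tensor_vec_def)
qed

lemma tensor_represents:
  assumes "\<And>j. j < n \<Longrightarrow> represents (D j) (B j) (W j)"
  shows "represents (tuples n D) (tensor_op n D B) (\<Prod>j\<leftarrow>[0..<n]. lift n D j (W j))"
  unfolding represents_def
proof (intro conjI ballI)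
  define P where "P = (\<Prod>j\<leftarrow>[0..<n]. lift n D j (W j))"
  show "preserves (tuples n D) P"
    unfolding P_def by (intro preserves_prod_list preserves_lift)
  fix \<psi> assume \<psi>: "\<psi> \<in> l2 (tuples n D)"
  show "tensor_op n D B \<psi> = vf (bop_apply P (Abs_ell2 \<psi>))"
  proof
    fix x
    have "((\<lambda>y. \<psi> y * vf (bop_apply P (ket y)) x) has_sum vf (bop_apply P (Abs_ell2 \<psi>)) x) UNIV"
      using has_sum_matrix_coeffs[of "Abs_ell2 \<psi>" P x] by (simp add: vf_Abs_l2[OF \<psi>])
    then have "((\<lambda>y. \<psi> y * vf (bop_apply P (ket y)) x) has_sum vf (bop_apply P (Abs_ell2 \<psi>)) x) (tuples n D)"
      using \<psi> by (subst has_sum_cong_neutral[where T=UNIV]) (auto simp: l2_def)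
    then have hs: "((\<lambda>y. if x \<in> tuples n D then (\<Prod>j<n. B j (basis (y j)) (x j)) * \<psi> y else 0)
                 has_sum vf (bop_apply P (Abs_ell2 \<psi>)) x) (tuples n D)"
      by (rule has_sum_cong[THEN iffD1, rotated])
         (simp add: P_def prod_list_lift_ket_coeffs[OF assms] mult.commute)
    show "tensor_op n D B \<psi> x = vf (bop_apply P (Abs_ell2 \<psi>)) x"
    proof (cases "x \<in> tuples n D")
      case True
      with hs show ?thesis by (simp add: tensor_op_def infsumI)
    next
      case False
      with hs have "((\<lambda>y. 0) has_sum vf (bop_apply P (Abs_ell2 \<psi>)) x) (tuples n D)" by simp
      with has_sum_0[of "tuples n D" "\<lambda>_. 0"] have "vf (bop_apply P (Abs_ell2 \<psi>)) x = 0"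
        using has_sum_unique by blast
      with False show ?thesis by (simp add: tensor_op_def)
    qed
  qed
qed

section \<open>Hamiltonians whose terms act nontrivially on at most one factor\<close>

locale single_site_terms =
  fixes n NH :: nat and D :: "nat \<Rightarrow> nat set" and t :: real
    and A :: "nat \<Rightarrow> nat \<Rightarrow> (nat \<Rightarrow> complex) \<Rightarrow> (nat \<Rightarrow> complex)"
  assumes bounded: "\<And>k j. k < NH \<Longrightarrow> j < n \<Longrightarrow> bounded_op (D j) (A k j)"
    and terms_commute: "\<And>k l \<psi>. k < NH \<Longrightarrow> l < NH \<Longrightarrow> \<psi> \<in> l2 (tuples n D) \<Longrightarrow>
          tensor_op n D (A k) (tensor_op n D (A l) \<psi>) = tensor_op n D (A l) (tensor_op n D (A k) \<psi>)"
    and one_nonscalar: "\<And>k. k < NH \<Longrightarrow> card {j. j < n \<and> \<not> real_scalar_op (D j) (A k j)} \<le> 1"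
begin

abbreviation scalar_factor :: "nat \<Rightarrow> nat \<Rightarrow> bool" where
  "scalar_factor k j \<equiv> real_scalar_op (D j) (A k j)"

(* The value n stands for "every factor of the term is scalar". *)
definition site :: "nat \<Rightarrow> nat" where
  "site k = (if \<exists>j<n. \<not> scalar_factor k j then SOME j. j < n \<and> \<not> scalar_factor k j else n)"

definition coef :: "nat \<Rightarrow> nat \<Rightarrow> real" where
  "coef k j = scal (D j) (A k j)"

definition factor :: "nat \<Rightarrow> nat \<Rightarrow> nat bop" where
  "factor k j = bop_of (D j) (A k j)"

definition tensor_term :: "nat \<Rightarrow> (nat \<Rightarrow> nat) bop" where
  "tensor_term k = (\<Prod>j\<leftarrow>[0..<n]. lift n D j (factor k j))"

definition scalar_part :: "nat \<Rightarrow> real" where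
  "scalar_part k = (if site k = n then \<Prod>m<n. coef k m else 0)"

definition exponent :: "nat \<Rightarrow> nat \<Rightarrow> nat bop" where
  "exponent k j = cscale_op (- \<i> * complex_of_real t * complex_of_real (delta n D (A k) j)) * factor k j"

definition factor_propagator :: "nat \<Rightarrow> nat bop" where
  "factor_propagator j = (\<Prod>k\<leftarrow>[0..<NH]. exp (exponent k j))"

definition product_propagator :: "(nat \<Rightarrow> nat) bop" where
  "product_propagator = (\<Prod>j\<leftarrow>[0..<n]. lift n D j (factor_propagator j))"

definition hamiltonian_exponent :: "(nat \<Rightarrow> nat) bop" where
  "hamiltonian_exponent = cscale_op (- \<i> * complex_of_real t) * (\<Sum>k<NH. tensor_term k)"

definition phase :: complex where
  "phase = exp (- \<i> * complex_of_real t * complex_of_real (\<Sum>k<NH. scalar_part k))"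

lemma site_nonscalar:
  assumes "j < n" "\<not> scalar_factor k j"
  shows "site k < n" "\<not> scalar_factor k (site k)"
proof -
  have "site k = (SOME j. j < n \<and> \<not> scalar_factor k j)" using assms by (auto simp: site_def)
  then show "site k < n" "\<not> scalar_factor k (site k)"
    using someI[of "\<lambda>j. j < n \<and> \<not> scalar_factor k j", OF conjI[OF assms]] by simp_all
qed

lemma site_cases: "site k = n \<or> site k < n \<and> \<not> scalar_factor k (site k)"
proof (cases "\<exists>j<n. \<not> scalar_factor k j")
  case True
  then show ?thesis using site_nonscalar by blast
next
  case False
  have "site k = n" unfolding site_def by (rule if_not_P[OF False])
  then show ?thesis ..
qed

lemma scalar_off_site:
  assumes "k < NH" "j < n" "j \<noteq> site k"
  shows "scalar_factor k j"
proof (rule ccontr)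
  assume j: "\<not> scalar_factor k j"
  with assms(2) have "j = site k"
    using eq_if_card_le_one[OF one_nonscalar[OF assms(1)] assms(2)] site_nonscalar by blast
  with assms(3) show False ..
qed

lemma delta_off_site: "k < NH \<Longrightarrow> j < n \<Longrightarrow> j \<noteq> site k \<Longrightarrow> delta n D (A k) j = 0"
  using scalar_off_site by (simp add: delta_def)

lemma delta_site: "site k < n \<Longrightarrow> delta n D (A k) (site k) = (\<Prod>m\<in>{..<n} - {site k}. coef k m)"
  using site_cases[of k] by (simp add: delta_def coef_def)

lemma site_eqI: "k < NH \<Longrightarrow> j < n \<Longrightarrow> delta n D (A k) j \<noteq> 0 \<Longrightarrow> site k = j"
  using delta_off_site by force

lemma represents_factor: "k < NH \<Longrightarrow> j < n \<Longrightarrow> represents (D j) (A k j) (factor k j)"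
  unfolding factor_def by (rule represents_bop_of[OF bounded])

lemma preserves_factor: "k < NH \<Longrightarrow> j < n \<Longrightarrow> preserves (D j) (factor k j)"
  unfolding factor_def by (rule preserves_bop_of[OF bounded])

lemma lift_scalar_factor:
  assumes "k < NH" "j < n" "scalar_factor k j"
  shows "lift n D j (factor k j) = lift n D j (coef k j *\<^sub>R 1)"
proof (rule lift_cong)
  have sc: "scalar_op (D j) (A k j) (coef k j)"
    using assms(3) unfolding real_scalar_op_def coef_def scal_def by (rule someI_ex)
  show "bop_apply (factor k j) u = bop_apply (coef k j *\<^sub>R 1) u" if "u \<in> ell2_on (D j)" for u
    using represents_unique[OF represents_factor[OF assms(1,2)] represents_scalar[OF sc] that] .
qed

lemma represents_tensor_term: "k < NH \<Longrightarrow> represents (tuples n D) (tensor_op n D (A k)) (tensor_term k)"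
  unfolding tensor_term_def by (rule tensor_represents) (rule represents_factor)

lemma tensor_term_apply:
  assumes "k < NH" "v \<in> ell2_on (tuples n D)"
  shows "bop_apply (tensor_term k) v = (\<Prod>m\<in>{..<n} - {site k}. coef k m) *\<^sub>R
           (if site k < n then bop_apply (lift n D (site k) (factor k (site k))) v else v)"
  using prod_list_lift_scalars[of "[0..<n]" n v D "site k"] assms scalar_off_site lift_scalar_factor
  by (simp add: tensor_term_def atLeast0LessThan lessThan_def)

lemma tensor_terms_commute_apply:
  assumes "k < NH" "l < NH" "v \<in> ell2_on (tuples n D)"
  shows "bop_apply (tensor_term k) (bop_apply (tensor_term l) v) = bop_apply (tensor_term l) (bop_apply (tensor_term k) v)"
proof -
  have \<psi>: "vf v \<in> l2 (tuples n D)" using assms(3) by (simp add: vf_l2_iff)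
  have "\<And>k l. k < NH \<Longrightarrow> l < NH \<Longrightarrow> bop_apply (tensor_term k) (bop_apply (tensor_term l) v)
      = Abs_ell2 (tensor_op n D (A k) (tensor_op n D (A l) (vf v)))"
    using represents_bop_apply[OF represents_tensor_term \<psi>] represents_bop_apply[OF represents_tensor_term]
      represents_bounded[OF represents_tensor_term] bounded_op_l2 \<psi> by (metis vf_inverse)
  with assms terms_commute[OF _ _ \<psi>] show ?thesis by metis
qed

lemma factors_commute:
  assumes "tuples n D \<noteq> {}" "k < NH" "l < NH" "j < n"
    and "delta n D (A k) j \<noteq> 0" "delta n D (A l) j \<noteq> 0"
  shows "factor k j * factor l j = factor l j * factor k j"
proof (rule lift_injective[OF assms(1,4)])
  show "preserves (D j) (factor k j * factor l j)" "preserves (D j) (factor l j * factor k j)"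
    using preserves_factor assms(2-4) by (auto intro: preserves_mult)
  show "bop_apply (factor k j * factor l j) (ket w) = bop_apply (factor l j * factor k j) (ket w)"
    if "w \<notin> D j" for w
    using bop_of_ket_out[OF bounded that] assms(2-4) by (simp add: factor_def bop_apply_mult)
  have site: "site k = j" "site l = j" using site_eqI assms(2-6) by auto
  \<comment> \<open>so T_k and T_l are nonzero multiples of the lifts of their factors at site j\<close>
  define c where "c = delta n D (A k) j * delta n D (A l) j"
  have "c \<noteq> 0" using assms(5,6) by (simp add: c_def)
  fix v assume v: "v \<in> ell2_on (tuples n D)"
  have "c *\<^sub>R bop_apply (lift n D j (factor k j)) (bop_apply (lift n D j (factor l j)) v)
      = c *\<^sub>R bop_apply (lift n D j (factor l j)) (bop_apply (lift n D j (factor k j)) v)"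
    using tensor_terms_commute_apply[OF assms(2,3) v] tensor_term_apply[OF assms(2)] tensor_term_apply[OF assms(3)]
      v lift_ell2_on site assms(4) delta_site[of k] delta_site[of l]
    by (simp add: c_def bop_apply_scaleR ell2_on_scaleR mult.commute)
  with \<open>c \<noteq> 0\<close> show "bop_apply (lift n D j (factor k j * factor l j)) v
      = bop_apply (lift n D j (factor l j * factor k j)) v"
    using assms(2-4) by (simp add: lift_mult preserves_factor bop_apply_mult)
qed

lemma exponents_commute:
  assumes "tuples n D \<noteq> {}" "k < NH" "l < NH" "j < n"
  shows "exponent k j * exponent l j = exponent l j * exponent k j"
proof (cases "delta n D (A k) j = 0 \<or> delta n D (A l) j = 0")
  case True
  then show ?thesis by (auto simp: exponent_def cscale_op_zero)
next
  case False
  with factors_commute assms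
  have "bop_apply (factor k j) (bop_apply (factor l j) w) = bop_apply (factor l j) (bop_apply (factor k j) w)" for w
    by (metis bop_apply_mult)
  then show ?thesis
    by (intro bop_eqI) (simp add: exponent_def bop_apply_mult bop_apply_cscale_op bop_apply_cscale cscale_cscale mult.commute)
qed

lemma factor_propagator_eq_exp:
  "tuples n D \<noteq> {} \<Longrightarrow> j < n \<Longrightarrow> factor_propagator j = exp (\<Sum>k<NH. exponent k j)"
  unfolding factor_propagator_def sum_list_upt_eq_sum[symmetric]
  by (rule prod_list_exp_commuting) (auto intro: exponents_commute)

lemma preserves_exponent_sum: "j < n \<Longrightarrow> preserves (D j) (\<Sum>k<NH. exponent k j)"
  unfolding exponent_def by (intro preserves_sum preserves_mult preserves_cscale_op preserves_factor) auto

lemma product_propagator_apply: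
  assumes "tuples n D \<noteq> {}" "v \<in> ell2_on (tuples n D)"
  shows "bop_apply product_propagator v = bop_apply (exp (\<Sum>j<n. lift n D j (\<Sum>k<NH. exponent k j))) v"
proof -
  have "bop_apply product_propagator v = bop_apply (\<Prod>j\<leftarrow>[0..<n]. exp (lift n D j (\<Sum>k<NH. exponent k j))) v"
    unfolding product_propagator_def
  proof (rule bop_apply_prod_list_cong[OF _ _ assms(2)])
    fix j u assume "j \<in> set [0..<n]" "u \<in> ell2_on (tuples n D)"
    then show "bop_apply (lift n D j (factor_propagator j)) u = bop_apply (exp (lift n D j (\<Sum>k<NH. exponent k j))) u"
      using lift_exp[OF _ preserves_exponent_sum] factor_propagator_eq_exp[OF assms(1)] by simp
  qed (rule preserves_lift)
  also have "(\<Prod>j\<leftarrow>[0..<n]. exp (lift n D j (\<Sum>k<NH. exponent k j))) = exp (\<Sum>j<n. lift n D j (\<Sum>k<NH. exponent k j))"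
    unfolding sum_list_upt_eq_sum[symmetric]
    by (rule prod_list_exp_commuting) (auto intro: lift_commute simp del: upt_Suc)
  finally show ?thesis .
qed

lemma preserves_tensor_term: "preserves (tuples n D) (tensor_term k)"
  unfolding tensor_term_def by (intro preserves_prod_list preserves_lift)

lemma tensor_term_exponent_apply:
  assumes "k < NH" "w \<in> ell2_on (tuples n D)"
  shows "cscale (- \<i> * complex_of_real t) (bop_apply (tensor_term k) w)
       = cscale (- \<i> * complex_of_real t * complex_of_real (scalar_part k)) w
         + (\<Sum>j<n. bop_apply (lift n D j (exponent k j)) w)"
proof -
  have off_site: "lift n D j (exponent k j) = 0" if "j < n" "j \<noteq> site k" for j
    using delta_off_site[OF assms(1) that] by (simp add: exponent_def cscale_op_zero lift_zero)
  show ?thesis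
  proof (cases "site k = n")
    case True
    then show ?thesis using tensor_term_apply[OF assms] off_site
      by (simp add: scalar_part_def cscale_of_real[symmetric] cscale_cscale)
  next
    case False
    with site_cases have j: "site k < n" by auto
    have "(\<Sum>j<n. bop_apply (lift n D j (exponent k j)) w) = bop_apply (lift n D (site k) (exponent k (site k))) w"
      using j off_site by (subst sum.remove[of _ "site k"]) auto
    with tensor_term_apply[OF assms] j delta_site[OF j] False show ?thesis
      by (simp add: scalar_part_def exponent_def lift_cscale_op bop_apply_mult bop_apply_cscale_op
          cscale_of_real[symmetric] cscale_cscale)
  qed
qed

lemma hamiltonian_exponent_apply:
  assumes "v \<in> ell2_on (tuples n D)"
  shows "bop_apply hamiltonian_exponent v
       = bop_apply (cscale_op (- \<i> * complex_of_real t * complex_of_real (\<Sum>k<NH. scalar_part k))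
                    + (\<Sum>j<n. lift n D j (\<Sum>k<NH. exponent k j))) v"
proof -
  have "bop_apply hamiltonian_exponent v = (\<Sum>k<NH. cscale (- \<i> * complex_of_real t) (bop_apply (tensor_term k) v))"
    by (simp add: hamiltonian_exponent_def bop_apply_mult bop_apply_cscale_op bop_apply_sum_op cscale_sum_right)
  also have "\<dots> = (\<Sum>k<NH. cscale (- \<i> * complex_of_real t * complex_of_real (scalar_part k)) v
                         + (\<Sum>j<n. bop_apply (lift n D j (exponent k j)) v))"
    using tensor_term_exponent_apply[OF _ assms] by (intro sum.cong) simp_all
  also have "\<dots> = (\<Sum>k<NH. cscale (- \<i> * complex_of_real t * complex_of_real (scalar_part k)) v)
                 + (\<Sum>k<NH. \<Sum>j<n. bop_apply (lift n D j (exponent k j)) v)"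
    by (rule sum.distrib)
  also have "\<dots> = bop_apply (cscale_op (- \<i> * complex_of_real t * complex_of_real (\<Sum>k<NH. scalar_part k))
                    + (\<Sum>j<n. lift n D j (\<Sum>k<NH. exponent k j))) v"
    by (simp add: bop_apply_plus_op bop_apply_cscale_op bop_apply_sum_op lift_sum cscale_sum_left
        sum_distrib_left sum.swap[of _ "{..<NH}"])
  finally show ?thesis .
qed

lemma exp_hamiltonian_exponent_apply:
  assumes v: "v \<in> ell2_on (tuples n D)"
  shows "bop_apply (exp hamiltonian_exponent) v = cscale phase (bop_apply product_propagator v)"
proof (cases "tuples n D = {}")
  case True
  with v have "v = 0" by (simp add: ell2_on_empty)
  then show ?thesis by (simp add: bop_apply_zero)
next
  case False
  define \<zeta> where "\<zeta> = - \<i> * complex_of_real t * complex_of_real (\<Sum>k<NH. scalar_part k)"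
  define R where "R = (\<Sum>j<n. lift n D j (\<Sum>k<NH. exponent k j))"
  have "preserves (tuples n D) hamiltonian_exponent"
    unfolding hamiltonian_exponent_def by (intro preserves_mult preserves_cscale_op preserves_sum preserves_tensor_term)
  then have "bop_apply (exp hamiltonian_exponent) v = bop_apply (exp (cscale_op \<zeta> + R)) v"
    using hamiltonian_exponent_apply v by (intro bop_apply_exp_cong) (auto simp: \<zeta>_def R_def)
  also have "exp (cscale_op \<zeta> + R) = exp (cscale_op \<zeta>) * exp R"
    by (rule exp_add_commuting[OF cscale_op_commute])
  also have "bop_apply (exp (cscale_op \<zeta>) * exp R) v = cscale phase (bop_apply (exp R) v)"
    by (simp add: bop_apply_mult bop_apply_exp_cscale_op phase_def \<zeta>_def)
  also have "bop_apply (exp R) v = bop_apply product_propagator v"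
    using product_propagator_apply[OF False v] by (simp add: R_def)
  finally show ?thesis .
qed

lemma norm_phase: "cmod phase = 1"
proof -
  have "phase = exp (\<i> * complex_of_real (- (t * (\<Sum>k<NH. scalar_part k))))"
    by (simp add: phase_def algebra_simps)
  then show ?thesis by (simp only: norm_exp_i_times)
qed

lemma represents_hamiltonian_exponent:
  "represents (tuples n D) (\<lambda>\<phi> x. - \<i> * complex_of_real t * (\<Sum>k<NH. tensor_op n D (A k) \<phi> x))
     hamiltonian_exponent"
  unfolding hamiltonian_exponent_def by (intro represents_scale represents_sum represents_tensor_term) simp

lemma represents_product_propagator:
  "represents (tuples n D) (tensor_op n D (U_factor n D t NH A)) product_propagator"
  unfolding product_propagator_def
proof (rule tensor_represents)
  fix j assume "j < n"
  then show "represents (D j) (U_factor n D t NH A j) (factor_propagator j)"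
    unfolding U_factor_def factor_propagator_def exponent_def
    by (intro represents_foldr represents_exp represents_scale represents_factor) auto
qed

end

theorem theorem2p5:
  fixes n NH :: nat and D :: "nat \<Rightarrow> nat set" and t :: real
    and A :: "nat \<Rightarrow> nat \<Rightarrow> (nat \<Rightarrow> complex) \<Rightarrow> (nat \<Rightarrow> complex)"
  assumes "n \<ge> 1" and "NH \<ge> 1"
    and sa: "\<forall>i<NH. \<forall>j<n. self_adjoint_op (D j) (A i j)"
    and comm: "\<forall>k<NH. \<forall>l<NH. \<forall>\<psi>\<in>l2 (tuples n D).
                 tensor_op n D (A k) (tensor_op n D (A l) \<psi>) = tensor_op n D (A l) (tensor_op n D (A k) \<psi>)"
    and one: "\<forall>i<NH. card {j. j < n \<and> \<not> real_scalar_op (D j) (A i j)} \<le> 1"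
  shows "\<exists>c::complex. cmod c = 1 \<and>
    (\<forall>\<psi>\<in>l2 (tuples n D).
       op_exp (\<lambda>\<phi> x. - \<i> * complex_of_real t * (\<Sum>i<NH. tensor_op n D (A i) \<phi> x)) \<psi>
       = (\<lambda>x. c * tensor_op n D (U_factor n D t NH A) \<psi> x))"
proof -
  interpret single_site_terms n NH D t A
    using sa comm one by unfold_locales (auto simp: self_adjoint_op_def)
  show ?thesis
  proof (intro exI conjI ballI)
    fix \<psi> assume \<psi>: "\<psi> \<in> l2 (tuples n D)"
    have "op_exp (\<lambda>\<phi> x. - \<i> * complex_of_real t * (\<Sum>i<NH. tensor_op n D (A i) \<phi> x)) \<psi>
        = vf (bop_apply (exp hamiltonian_exponent) (Abs_ell2 \<psi>))"
      using represents_exp[OF represents_hamiltonian_exponent] \<psi> by (simp add: represents_def)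
    also have "\<dots> = vf (cscale phase (bop_apply product_propagator (Abs_ell2 \<psi>)))"
      using exp_hamiltonian_exponent_apply[OF Abs_l2_ell2_on[OF \<psi>]] by simp
    also have "\<dots> = (\<lambda>x. phase * tensor_op n D (U_factor n D t NH A) \<psi> x)"
      using represents_product_propagator \<psi> by (simp add: represents_def vf_cscale)
    finally show "op_exp (\<lambda>\<phi> x. - \<i> * complex_of_real t * (\<Sum>i<NH. tensor_op n D (A i) \<phi> x)) \<psi>
        = (\<lambda>x. phase * tensor_op n D (U_factor n D t NH A) \<psi> x)" .
  qed (rule norm_phase)
qed

end
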